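(* (Multivariate Covering Lemma.) Let $k\ge 1$ and let $(U,V_0,V_1,\dots,V_k)$ be random variables on finite alphabets with joint pmf $p_{U,V_{[0:k]}}$. For each $j\in[1:k]$ let $\mathcal{A}_j\subseteq[1:j-1]$, where the sets satisfy: if $i\in\mathcal{A}_j$ then $\mathcal{A}_i\subseteq\mathcal{A}_j$. Let $r_1,\dots,r_k\ge 0$. For each $n$, let $(U^n,V_0^n)$ be a pair of random sequences with some joint distribution $p_{U^n,V_0^n}$, and generate a random codebook as follows: for each $j\in[1:k]$ and each $m_{\mathcal{A}_j}\in\prod_{i\in\mathcal{A}_j}[1:2^{nr_i}]$, let $V_j^n(m_{\mathcal{A}_j},m_j)$, $m_j\in[1:2^{nr_j}]$, be pairwise conditionally independent random sequences, each distributed according to $\prod_{i=1}^n p_{V_j|V_{\mathcal{A}_j},V_0}(v_{j,i}\mid v_{\mathcal{A}_j,i}(m_{\mathcal{A}_j}),v_{0,i})$, where $v_{\mathcal{A}_j}^n(m_{\mathcal{A}_j})$ denotes the previously generated codewords $(V_i^n(m_{\mathcal{A}_i},m_i))_{i\in\mathcal{A}_j}$ and $v_0^n$ is the realization of $V_0^n$; the codebook is generated conditionally on $V_0^n$ only, i.e., it is conditionally independent of $U^n$ given $V_0^n$. Write $V_{[1:k]}^n(m_{[1:k]})=(V_j^n(m_{\mathcal{A}_j},m_j))_{j\in[1:k]}$. Let $0<\epsilon'<\epsilon$. If $\lim_{n\to\infty}\mathbb{P}((U^n,V_0^n)\in\mathcal{T}_{\epsilon'}^{(n)}(U,V_0))=1$,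 then there exists $\delta(\epsilon)$, tending to $0$ as $\epsilon\to0$, such that $$\lim_{n\to\infty}\mathbb{P}\big((U^n,V_0^n,V_{[1:k]}^n(m_{[1:k]}))\in\mathcal{T}_\epsilon^{(n)}\text{ for some }m_{[1:k]}\big)=1$$ whenever $\sum_{j\in\mathcal{J}}r_j>\sum_{j\in\mathcal{J}}H(V_j\mid V_{\mathcal{A}_j}V_0)-H(V_{\mathcal{J}}\mid V_0U)+\delta(\epsilon)$ for all nonempty $\mathcal{J}\subseteq[1:k]$ such that $j\in\mathcal{J}$ implies $\mathcal{A}_j\subseteq\mathcal{J}$.
   Context: $[i:j]$ denotes $\{\lfloor i\rfloor,\lfloor i\rfloor+1,\dots,\lfloor j\rfloor\}$ and $X_{\mathcal{A}}=(X_j:j\in\mathcal{A})$. For a random variable $X\sim p_X$ on a finite alphabet $\mathcal{X}$ and $\epsilon\in(0,1)$, the typical set is $\mathcal{T}_\epsilon^{(n)}(X)=\{x^n:\big|\,|\{i:x_i=x\}|/n-p_X(x)\big|\le\epsilon p_X(x)\text{ for all }x\in\mathcal{X}\}$; for tuples of sequences it is taken with respect to the joint pmf of the corresponding tuple of random variables (here the joint pmf $p_{U,V_{[0:k]}}$ and its marginals). *)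

theory Defs
  imports "HOL-Probability.Probability"
begin

(* Random variables: U takes values in 'u, V_0,...,V_k take values in 'v.
   The joint pmf p is a pmf on 'u \<times> (nat \<Rightarrow> 'v); V_j = snd x j for j \<in> {0..k};
   components j > k are ignored (everything is restricted to {0..k}).
   Sequences of length n are functions nat \<Rightarrow> _, only positions i < n matter. *)

definition typical :: "'a pmf \<Rightarrow> real \<Rightarrow> nat \<Rightarrow> (nat \<Rightarrow> 'a) set" where
  "typical q eps n =
     {x. \<forall>a. \<bar>real (card {i. i < n \<and> x i = a}) / real n - pmf q a\<bar> \<le> eps * pmf q a}"

definition entropy_pmf :: "'a pmf \<Rightarrow> real" where
  "entropy_pmf q = - (\<Sum>x\<in>set_pmf q. pmf q x * log 2 (pmf q x))"

definition marg_UV :: "('u \<times> (nat \<Rightarrow> 'v)) pmf \<Rightarrow> nat set \<Rightarrow> ('u \<times> (nat \<Rightarrow> 'v)) pmf" where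
  "marg_UV p S = map_pmf (\<lambda>(u, v). (u, restrict v S)) p"

definition marg_V :: "('u \<times> (nat \<Rightarrow> 'v)) pmf \<Rightarrow> nat set \<Rightarrow> (nat \<Rightarrow> 'v) pmf" where
  "marg_V p S = map_pmf (\<lambda>(u, v). restrict v S) p"

definition cond_ent_j :: "('u \<times> (nat \<Rightarrow> 'v)) pmf \<Rightarrow> (nat \<Rightarrow> nat set) \<Rightarrow> nat \<Rightarrow> real" where
  "cond_ent_j p A j = entropy_pmf (marg_V p (insert j (insert 0 (A j))))
                      - entropy_pmf (marg_V p (insert 0 (A j)))"

definition cond_ent_J :: "('u \<times> (nat \<Rightarrow> 'v)) pmf \<Rightarrow> nat set \<Rightarrow> real" where
  "cond_ent_J p J = entropy_pmf (marg_UV p (insert 0 J)) - entropy_pmf (marg_UV p {0})"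

(* conditional pmf p_{V_j | V_B, V_0}( . | w_B, v0).  Convention: if the conditioning
   event has probability 0, the (unconditional) marginal of V_j is used. *)
definition cond_V :: "('u \<times> (nat \<Rightarrow> 'v)) pmf \<Rightarrow> nat set \<Rightarrow> nat \<Rightarrow> (nat \<Rightarrow> 'v) \<Rightarrow> 'v \<Rightarrow> 'v pmf" where
  "cond_V p B j w v0 =
     (let E = {x. (\<forall>a\<in>B. snd x a = w a) \<and> snd x 0 = v0}
      in if set_pmf p \<inter> E \<noteq> {} then map_pmf (\<lambda>x. snd x j) (cond_pmf p E)
         else map_pmf (\<lambda>x. snd x j) p)"

(* [1:2^{nr}] = {1 .. floor(2^{nr})} *)
definition num_msgs :: "real \<Rightarrow> nat \<Rightarrow> nat" where
  "num_msgs r n = nat \<lfloor>2 powr (real n * r)\<rfloor>"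

(* codebook: c j m i = i-th symbol of V_j^n(m), where m is a function on A_j \<union> {j},
   i.e. the index (m_{A_j}, m_j) *)
type_synonym 'v codebook = "nat \<Rightarrow> (nat \<Rightarrow> nat) \<Rightarrow> nat \<Rightarrow> 'v"

definition idx :: "(nat \<Rightarrow> nat set) \<Rightarrow> (nat \<Rightarrow> nat) \<Rightarrow> nat \<Rightarrow> (nat \<Rightarrow> nat) set" where
  "idx A L j = PiE (insert j (A j)) (\<lambda>i. {1..L i})"

definition msgs :: "(nat \<Rightarrow> nat) \<Rightarrow> nat \<Rightarrow> (nat \<Rightarrow> nat) set" where
  "msgs L k = PiE {1..k} (\<lambda>j. {1..L j})"

definition gen_level :: "('u \<times> (nat \<Rightarrow> 'v)) pmf \<Rightarrow> (nat \<Rightarrow> nat set) \<Rightarrow> (nat \<Rightarrow> nat) \<Rightarrow> nat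
    \<Rightarrow> nat \<Rightarrow> (nat \<Rightarrow> 'v) \<Rightarrow> 'v codebook \<Rightarrow> 'v codebook pmf" where
  "gen_level p A L n j vs c =
     map_pmf (\<lambda>f. c(j := (\<lambda>m i. f (m, i))))
       (Pi_pmf (idx A L j \<times> {..<n}) undefined
          (\<lambda>(m, i). cond_V p (A j) j (\<lambda>a. c a (restrict m (insert a (A a))) i) (vs i)))"

fun canon_cb :: "('u \<times> (nat \<Rightarrow> 'v)) pmf \<Rightarrow> (nat \<Rightarrow> nat set) \<Rightarrow> (nat \<Rightarrow> nat) \<Rightarrow> nat
    \<Rightarrow> (nat \<Rightarrow> 'v) \<Rightarrow> nat \<Rightarrow> 'v codebook pmf" where
  "canon_cb p A L n vs 0 = return_pmf (\<lambda>j m i. undefined)"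
| "canon_cb p A L n vs (Suc j) = canon_cb p A L n vs j \<bind> gen_level p A L n (Suc j) vs"

definition codewords :: "(nat \<Rightarrow> nat set) \<Rightarrow> nat \<Rightarrow> nat \<Rightarrow> 'v codebook \<Rightarrow> (nat \<Rightarrow> nat)
    \<Rightarrow> nat \<Rightarrow> nat \<Rightarrow> 'v" where
  "codewords A k n c m =
     restrict (\<lambda>j. restrict (c j (restrict m (insert j (A j)))) {..<n}) {1..k}"

definition joint_seq :: "(nat \<Rightarrow> nat set) \<Rightarrow> nat \<Rightarrow> (nat \<Rightarrow> 'u) \<Rightarrow> (nat \<Rightarrow> 'v) \<Rightarrow> 'v codebook
    \<Rightarrow> (nat \<Rightarrow> nat) \<Rightarrow> nat \<Rightarrow> 'u \<times> (nat \<Rightarrow> 'v)" where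
  "joint_seq A k us vs c m =
     (\<lambda>i. (us i, restrict (\<lambda>j. if j = 0 then vs i else c j (restrict m (insert j (A j))) i) {0..k}))"

end

theory Submission
  imports Defs
begin

text \<open>Second moment method. Fix an \<epsilon>'-typical pair (u^n, v_0^n) and let N count the message
  tuples whose codewords are \<epsilon>-jointly typical with it. A typical row has generation probability
  about 2^(n E[log_ratio {}]) times its true conditional probability, which gives E N. Two tuples
  share exactly the codewords on the ancestral set J of levels where their indices agree, and the
  probability that both cover is bounded in the same way with E[log_ratio J]. The difference of
  the two means is sum_{j in J} H(V_j | V_{A_j} V_0) - H(V_J | V_0 U), so the rate condition forces
  Var N / (E N)^2 \<rightarrow> 0 and hence P(N = 0) \<rightarrow> 0; the \<epsilon>-slack of typicality is absorbed into
  \<delta>(\<epsilon>) = \<epsilon> D for a constant D.\<close>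

type_synonym ('u, 'v) joint_symbol = "'u \<times> (nat \<Rightarrow> 'v)"
type_synonym 'v rows = "nat \<Rightarrow> nat \<Rightarrow> 'v"

lemma measure_cond_pmf_eq:
  assumes "set_pmf p \<inter> s \<noteq> {}"
  shows "measure (measure_pmf (cond_pmf p s)) B = measure p (s \<inter> B) / measure p s"
proof -
  have "emeasure (measure_pmf p) s \<noteq> 0"
    using emeasure_measure_pmf_not_zero[OF assms] .
  then show ?thesis
    by (simp add: cond_pmf.rep_eq[OF assms] measure_pmf.emeasure_eq_measure)
qed

lemma pmf_map_finite:
  assumes "finite (set_pmf M)"
  shows "pmf (map_pmf f M) b = (\<Sum>a\<in>{a\<in>set_pmf M. f a = b}. pmf M a)"
proof -
  have "pmf (map_pmf f M) b = measure M (f -` {b})" by (simp add: pmf_map)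
  also have "\<dots> = measure M (f -` {b} \<inter> set_pmf M)" by (simp add: measure_Int_set_pmf)
  also have "\<dots> = (\<Sum>a\<in>f -` {b} \<inter> set_pmf M. pmf M a)"
    using assms by (intro measure_measure_pmf_finite) auto
  also have "f -` {b} \<inter> set_pmf M = {a\<in>set_pmf M. f a = b}" by auto
  finally show ?thesis .
qed

lemma entropy_pmf_map:
  assumes fin: "finite (set_pmf M)"
  shows "entropy_pmf (map_pmf f M) = - (\<Sum>a\<in>set_pmf M. pmf M a * log 2 (pmf (map_pmf f M) (f a)))"
proof -
  let ?g = "\<lambda>a. pmf M a * log 2 (pmf (map_pmf f M) (f a))"
  have "(\<Sum>a\<in>set_pmf M. ?g a) = (\<Sum>b\<in>f ` set_pmf M. \<Sum>a\<in>{a\<in>set_pmf M. f a = b}. ?g a)"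
    using fin by (rule sum.image_gen)
  also have "\<dots> = (\<Sum>b\<in>f ` set_pmf M. (\<Sum>a\<in>{a\<in>set_pmf M. f a = b}. pmf M a)
      * log 2 (pmf (map_pmf f M) b))"
    by (intro sum.cong refl) (auto simp: sum_distrib_right)
  also have "\<dots> = (\<Sum>b\<in>set_pmf (map_pmf f M). pmf (map_pmf f M) b * log 2 (pmf (map_pmf f M) b))"
    by (simp add: pmf_map_finite[OF fin])
  finally show ?thesis by (simp add: entropy_pmf_def)
qed

lemma prod_of_bool: "finite S \<Longrightarrow> (\<Prod>x\<in>S. of_bool (P x) :: 'a::comm_semiring_1)
    = of_bool (\<forall>x\<in>S. P x)"
  by (induction S rule: finite_induct) auto

lemma sum_by_count:
  fixes n :: nat
  assumes fin: "finite S" and sub: "\<And>i. i < n \<Longrightarrow> s i \<in> S"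
  shows "(\<Sum>i<n. h (s i)) = (\<Sum>a\<in>S. real (card {i. i < n \<and> s i = a}) * h a)"
proof -
  have "(\<Sum>i<n. h (s i)) = (\<Sum>a\<in>S. \<Sum>i\<in>{i\<in>{..<n}. s i = a}. h (s i))"
    using sub by (intro sum.group[symmetric] fin finite_lessThan) auto
  also have "\<dots> = (\<Sum>a\<in>S. real (card {i. i < n \<and> s i = a}) * h a)"
  proof (intro sum.cong refl)
    fix a assume "a \<in> S"
    have "(\<Sum>i\<in>{i\<in>{..<n}. s i = a}. h (s i)) = (\<Sum>i\<in>{i\<in>{..<n}. s i = a}. h a)"
      by (intro sum.cong) auto
    also have "{i\<in>{..<n}. s i = a} = {i. i < n \<and> s i = a}" by auto
    finally show "(\<Sum>i\<in>{i\<in>{..<n}. s i = a}. h (s i)) = real (card {i. i < n \<and> s i = a}) * h a" by simp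
  qed
  finally show ?thesis .
qed

lemma sum_PiE_weight_mult_coords:
  fixes w :: "'a \<Rightarrow> 'b \<Rightarrow> real" and f g :: "'b \<Rightarrow> real"
  assumes fin: "finite I" and finB: "\<And>i. i \<in> I \<Longrightarrow> finite (B i)" and ij: "i \<in> I" "j \<in> I"
  shows "(\<Sum>x\<in>PiE I B. (\<Prod>t\<in>I. w t (x t)) * (f (x i) * g (x j)))
    = (\<Prod>t\<in>I. \<Sum>s\<in>B t. w t s * ((if t = i then f s else 1) * (if t = j then g s else 1)))"
proof -
  have "f (x i) * g (x j) = (\<Prod>t\<in>I. (if t = i then f (x t) else 1) * (if t = j then g (x t) else 1))" for x
    using ij fin by (simp add: prod.distrib)
  hence "(\<Sum>x\<in>PiE I B. (\<Prod>t\<in>I. w t (x t)) * (f (x i) * g (x j)))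
      = (\<Sum>x\<in>PiE I B. \<Prod>t\<in>I. w t (x t) * ((if t = i then f (x t) else 1) * (if t = j then g (x t) else 1)))"
    by (simp add: prod.distrib)
  also have "\<dots> = (\<Prod>t\<in>I. \<Sum>s\<in>B t. w t s * ((if t = i then f s else 1) * (if t = j then g s else 1)))"
    by (rule prod_sum_PiE[OF fin finB, symmetric])
  finally show ?thesis .
qed

lemma variance_sum_le_card:
  fixes w z :: "'a \<Rightarrow> 'b \<Rightarrow> real"
  assumes fin: "finite I" and finB: "\<And>i. i \<in> I \<Longrightarrow> finite (B i)"
    and w1: "\<And>i. i \<in> I \<Longrightarrow> (\<Sum>s\<in>B i. w i s) = 1"
    and w0: "\<And>i s. i \<in> I \<Longrightarrow> s \<in> B i \<Longrightarrow> w i s \<ge> 0"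
    and z01: "\<And>i s. i \<in> I \<Longrightarrow> s \<in> B i \<Longrightarrow> 0 \<le> z i s \<and> z i s \<le> 1"
  defines "\<mu> \<equiv> \<lambda>i. \<Sum>s\<in>B i. w i s * z i s"
  shows "(\<Sum>x\<in>PiE I B. (\<Prod>i\<in>I. w i (x i)) * ((\<Sum>i\<in>I. z i (x i)) - (\<Sum>i\<in>I. \<mu> i))^2)
      \<le> real (card I)"
proof -
  define c where "c = (\<lambda>i s. z i s - \<mu> i)"
  have mu01: "0 \<le> \<mu> i \<and> \<mu> i \<le> 1" if "i \<in> I" for i
  proof -
    have "\<mu> i \<le> (\<Sum>s\<in>B i. w i s)" unfolding \<mu>_def
      using that w0 z01 by (intro sum_mono) (simp add: mult_left_le)
    moreover have "\<mu> i \<ge> 0" unfolding \<mu>_def using that w0 z01 by (intro sum_nonneg) auto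
    ultimately show ?thesis using w1[OF that] by simp
  qed
  have cb: "\<bar>c i s\<bar> \<le> 1" if "i \<in> I" "s \<in> B i" for i s
    using z01[OF that] mu01[OF that(1)] unfolding c_def by auto
  have sq: "((\<Sum>i\<in>I. z i (x i)) - (\<Sum>i\<in>I. \<mu> i))^2
      = (\<Sum>i\<in>I. \<Sum>j\<in>I. c i (x i) * c j (x j))" for x
    by (simp add: c_def sum_subtractf[symmetric] power2_eq_square sum_product)
  have off: "(\<Sum>x\<in>PiE I B. (\<Prod>t\<in>I. w t (x t)) * (c i (x i) * c j (x j))) = 0"
    if ij: "i \<in> I" "j \<in> I" "i \<noteq> j" for i j
  proof -
    have "(\<Sum>s\<in>B i. w i s * ((if i = i then c i s else 1) * (if i = j then c j s else 1))) = 0"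
    proof -
      have "(\<Sum>s\<in>B i. w i s * ((if i = i then c i s else 1) * (if i = j then c j s else 1)))
          = (\<Sum>s\<in>B i. w i s * z i s) - (\<Sum>s\<in>B i. w i s) * \<mu> i"
        using ij by (simp add: c_def algebra_simps sum_subtractf sum_distrib_right sum_distrib_left)
      also have "\<dots> = 0" using w1[OF ij(1)] by (simp add: \<mu>_def)
      finally show ?thesis .
    qed
    hence "(\<Prod>t\<in>I. \<Sum>s\<in>B t. w t s * ((if t = i then c i s else 1) * (if t = j then c j s else 1))) = 0"
      using ij fin by (intro prod_zero bexI[of _ i]) auto
    thus ?thesis using sum_PiE_weight_mult_coords[OF fin finB ij(1,2), where w=w and f="c i" and g="c j"] by simp
  qed
  have diag: "(\<Sum>x\<in>PiE I B. (\<Prod>t\<in>I. w t (x t)) * (c i (x i) * c i (x i))) \<le> 1"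
    if i: "i \<in> I" for i
  proof -
    have "(\<Prod>t\<in>I. \<Sum>s\<in>B t. w t s * ((if t = i then c i s else 1) * (if t = i then c i s else 1)))
        = (\<Prod>t\<in>I. if t = i then (\<Sum>s\<in>B i. w i s * (c i s * c i s)) else 1)"
      using w1 by (intro prod.cong refl) auto
    also have "\<dots> = (\<Sum>s\<in>B i. w i s * (c i s * c i s))" using i fin by (simp add: prod.delta)
    also have "\<dots> \<le> (\<Sum>s\<in>B i. w i s * 1)"
    proof (intro sum_mono mult_left_mono)
      fix s assume s: "s \<in> B i"
      have "\<bar>c i s\<bar> * \<bar>c i s\<bar> \<le> 1 * 1" using cb[OF i s] by (intro mult_mono) auto
      thus "c i s * c i s \<le> 1" by (simp add: abs_mult[symmetric])
      show "0 \<le> w i s" using w0 i s by auto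
    qed
    also have "\<dots> = 1" using w1[OF i] by simp
    finally show ?thesis using sum_PiE_weight_mult_coords[OF fin finB i i, where w=w and f="c i" and g="c i"] by simp
  qed
  have "(\<Sum>x\<in>PiE I B. (\<Prod>i\<in>I. w i (x i)) * ((\<Sum>i\<in>I. z i (x i)) - (\<Sum>i\<in>I. \<mu> i))^2)
      = (\<Sum>i\<in>I. \<Sum>j\<in>I. \<Sum>x\<in>PiE I B. (\<Prod>t\<in>I. w t (x t)) * (c i (x i) * c j (x j)))"
    unfolding sq by (simp add: sum_distrib_left sum.swap[of _ "PiE I B"])
  also have "\<dots> = (\<Sum>i\<in>I. \<Sum>x\<in>PiE I B. (\<Prod>t\<in>I. w t (x t)) * (c i (x i) * c i (x i)))"
  proof (intro sum.cong refl)
    fix i assume i: "i \<in> I"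
    have "(\<Sum>j\<in>I. \<Sum>x\<in>PiE I B. (\<Prod>t\<in>I. w t (x t)) * (c i (x i) * c j (x j)))
        = (\<Sum>j\<in>I. if j = i then (\<Sum>x\<in>PiE I B. (\<Prod>t\<in>I. w t (x t)) * (c i (x i) * c i (x i))) else 0)"
      using off i by (intro sum.cong refl) auto
    also have "\<dots> = (\<Sum>x\<in>PiE I B. (\<Prod>t\<in>I. w t (x t)) * (c i (x i) * c i (x i)))"
      using i fin by (simp add: sum.delta')
    finally show "(\<Sum>j\<in>I. \<Sum>x\<in>PiE I B. (\<Prod>t\<in>I. w t (x t)) * (c i (x i) * c j (x j)))
        = (\<Sum>x\<in>PiE I B. (\<Prod>t\<in>I. w t (x t)) * (c i (x i) * c i (x i)))" .
  qed
  also have "\<dots> \<le> (\<Sum>i\<in>I. 1)" by (intro sum_mono diag)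
  finally show ?thesis by simp
qed

lemma integrable_bounded_pmf:
  fixes f :: "'a \<Rightarrow> real"
  assumes "\<And>x. \<bar>f x\<bar> \<le> B"
  shows "integrable (measure_pmf G) f"
  by (rule measure_pmf.integrable_const_bound[where B=B]) (use assms in auto)

lemma measure_bind_pmf:
  "measure (measure_pmf (M \<bind> N)) X = (\<integral>x. measure (measure_pmf (N x)) X \<partial>measure_pmf M)"
proof -
  have "emeasure (measure_pmf (M \<bind> N)) X = (\<integral>\<^sup>+ x. emeasure (measure_pmf (N x)) X \<partial>measure_pmf M)"
    by (rule emeasure_bind_pmf)
  also have "\<dots> = (\<integral>\<^sup>+ x. ennreal (measure (measure_pmf (N x)) X) \<partial>measure_pmf M)"
    by (simp add: measure_pmf.emeasure_eq_measure)
  also have "\<dots> = ennreal (\<integral>x. measure (measure_pmf (N x)) X \<partial>measure_pmf M)"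
    by (rule nn_integral_eq_integral)
       (auto intro!: integrable_bounded_pmf[where B=1])
  finally show ?thesis
    by (simp add: measure_pmf.emeasure_eq_measure integral_nonneg_AE)
qed

lemma measure_bind_pmf_ge:
  fixes M :: "'a pmf" and N :: "'a \<Rightarrow> 'b pmf"
  assumes "\<And>x. x \<in> T \<Longrightarrow> c \<le> measure_pmf.prob (N x) B"
  shows "c * measure_pmf.prob M T \<le> measure_pmf.prob (bind_pmf M N) B"
proof -
  have "c * measure_pmf.prob M T = (\<integral>x. indicator T x * c \<partial>M)" by simp
  also have "\<dots> \<le> (\<integral>x. measure_pmf.prob (N x) B \<partial>M)"
    using assms
    by (intro integral_mono integrable_bounded_pmf[where B="\<bar>c\<bar>"] integrable_bounded_pmf[where B=1])
       (auto simp: indicator_def)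
  also have "\<dots> = measure_pmf.prob (bind_pmf M N) B" by (rule measure_bind_pmf[symmetric])
  finally show ?thesis .
qed

lemma measure_pmf_eq_sum_on_support:
  fixes M :: "'a pmf"
  assumes "finite S" "set_pmf M \<subseteq> S"
  shows "measure M B = (\<Sum>x\<in>B \<inter> S. pmf M x)"
proof -
  have "measure M B = measure M (B \<inter> set_pmf M)" by (rule measure_Int_set_pmf[symmetric])
  also have "\<dots> = measure M ((B \<inter> S) \<inter> set_pmf M)"
    using assms(2) by (intro arg_cong[where f="measure M"]) auto
  also have "\<dots> = measure M (B \<inter> S)" by (rule measure_Int_set_pmf)
  also have "\<dots> = (\<Sum>x\<in>B \<inter> S. pmf M x)" using assms(1) by (intro measure_measure_pmf_finite) auto
  finally show ?thesis .
qed

lemma pmf_map_Pi_pmf: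
  assumes "finite I"
  shows "pmf (map_pmf f (Pi_pmf I dflt D)) z
    = measure (Pi_pmf I dflt D) (f -` {z} \<inter> {g. \<forall>x. x \<notin> I \<longrightarrow> g x = dflt})"
proof -
  let ?M = "Pi_pmf I dflt D"
  have "pmf (map_pmf f ?M) z = measure ?M (f -` {z} \<inter> set_pmf ?M)"
    by (simp add: pmf_map measure_Int_set_pmf)
  also have "f -` {z} \<inter> set_pmf ?M = (f -` {z} \<inter>
      {g. \<forall>x. x \<notin> I \<longrightarrow> g x = dflt}) \<inter> set_pmf ?M"
    using set_Pi_pmf_subset[OF assms, of dflt D] by auto
  finally show ?thesis by (simp add: measure_Int_set_pmf)
qed

lemma prob_zero_le_second_moment:
  fixes M :: "'c pmf" and N :: "'c \<Rightarrow> real"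
  assumes bounded: "\<And>c. \<bar>N c\<bar> \<le> B"
    and mean: "(\<integral>c. N c \<partial>M) = mu" and mu_pos: "mu > 0"
    and second: "(\<integral>c. N c * N c \<partial>M) \<le> mu^2 * (1 + eta)"
  shows "measure M {c. N c = 0} \<le> eta"
proof -
  have iN: "integrable M N" using bounded by (rule integrable_bounded_pmf)
  have iN2: "integrable M (\<lambda>c. N c * N c)"
  proof (rule integrable_bounded_pmf[where B="B * B"])
    fix c
    have "\<bar>N c\<bar> * \<bar>N c\<bar> \<le> B * B" using bounded[of c] by (intro mult_mono) auto
    thus "\<bar>N c * N c\<bar> \<le> B * B" by (simp add: abs_mult)
  qed
  have pointwise: "indicator {c. N c = 0} c \<le> (N c * N c - 2 * mu * N c + mu^2) / mu^2" for c
  proof -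
    have "N c * N c - 2 * mu * N c + mu^2 = (N c - mu)^2" by (simp add: power2_eq_square algebra_simps)
    thus ?thesis using mu_pos by (auto simp: indicator_def)
  qed
  have "measure M {c. N c = 0} = (\<integral>c. indicator {c. N c = 0} c \<partial>M)" by simp
  also have "\<dots> \<le> (\<integral>c. (N c * N c - 2 * mu * N c + mu^2) / mu^2 \<partial>M)"
  proof (rule integral_mono[OF _ _ pointwise])
    show "integrable M (indicator {c. N c = 0} :: _ \<Rightarrow> real)"
      by (rule integrable_bounded_pmf[where B=1]) simp
    show "integrable M (\<lambda>c. (N c * N c - 2 * mu * N c + mu^2) / mu^2)"
      by (intro Bochner_Integration.integrable_divide Bochner_Integration.integrable_add
           Bochner_Integration.integrable_diff iN2 Bochner_Integration.integrable_mult_right iN) simp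
  qed
  also have "\<dots> = ((\<integral>c. N c * N c \<partial>M) - 2 * mu * (\<integral>c. N c \<partial>M) + mu^2) / mu^2"
    using iN iN2 by simp
  also have "\<dots> \<le> (mu^2 * (1 + eta) - 2 * mu * mu + mu^2) / mu^2"
    unfolding mean using second mu_pos by (intro divide_right_mono) auto
  also have "\<dots> = eta" using mu_pos by (simp add: field_simps power2_eq_square)
  finally show ?thesis .
qed

lemma second_moment_bound:
  fixes G :: "'c pmf" and X :: "'m \<Rightarrow> 'c \<Rightarrow> bool"
  assumes fin: "finite Ms"
    and mu: "mu = (\<Sum>m\<in>Ms. measure G {c. X m c})" and mu_pos: "mu > 0"
    and sq: "(\<Sum>m\<in>Ms. \<Sum>m'\<in>Ms. measure G {c. X m c \<and> X m' c}) \<le> mu^2 * (1 + eta)"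
  shows "measure G {c. \<exists>m\<in>Ms. X m c} \<ge> 1 - eta"
proof -
  define N where "N c = (\<Sum>m\<in>Ms. indicator {c. X m c} c :: real)" for c
  have N_nonneg: "N c \<ge> 0" for c unfolding N_def by (intro sum_nonneg) auto
  have "\<bar>N c\<bar> \<le> real (card Ms)" for c
    using N_nonneg[of c] sum_mono[of Ms "\<lambda>m. indicator {c. X m c} c :: real" "\<lambda>_. 1"]
    by (simp add: N_def indicator_def)
  moreover have "(\<integral>c. N c \<partial>G) = mu"
    unfolding N_def mu by (subst Bochner_Integration.integral_sum) (auto intro: integrable_bounded_pmf[where B=1])
  moreover have "(\<integral>c. N c * N c \<partial>G) = (\<Sum>m\<in>Ms. \<Sum>m'\<in>Ms. measure G {c. X m c \<and> X m' c})"
  proof -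
    have "N c * N c = (\<Sum>m\<in>Ms. \<Sum>m'\<in>Ms. indicator {c. X m c \<and> X m' c} c)" for c
      by (simp add: N_def sum_product indicator_def of_bool_conj)
    thus ?thesis
      by (simp add: Bochner_Integration.integral_sum Bochner_Integration.integrable_sum
            integrable_bounded_pmf[where B=1])
  qed
  ultimately have "measure G {c. N c = 0} \<le> eta"
    using mu_pos sq by (intro prob_zero_le_second_moment[where B="real (card Ms)"]) auto
  moreover have "{c. N c = 0} = - {c. \<exists>m\<in>Ms. X m c}"
    using fin by (auto simp: N_def sum_nonneg_eq_0_iff indicator_def)
  moreover have "measure G (- {c. \<exists>m\<in>Ms. X m c}) = 1 - measure G {c. \<exists>m\<in>Ms. X m c}"
    using measure_pmf.prob_compl[of "{c. \<exists>m\<in>Ms. X m c}" G] by (simp add: Compl_eq_Diff_UNIV)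
  ultimately show ?thesis by simp
qed

lemma tendsto_powr_neg_mult:
  assumes "g > (0::real)"
  shows "(\<lambda>n. 2 powr (- (real n * g))) \<longlonglongrightarrow> 0"
proof -
  have "2 powr (- g) < 1" using assms by (simp add: powr_less_one)
  hence "(\<lambda>n. (2 powr (- g)) ^ n) \<longlonglongrightarrow> 0" by (intro LIMSEQ_power_zero) simp
  moreover have "(2 powr (- g)) ^ n = 2 powr (- (real n * g))" for n
    by (simp add: powr_realpow[symmetric] powr_powr mult.commute)
  ultimately show ?thesis by simp
qed

lemma typical_in_support:
  assumes "s \<in> typical M eps n" "i < n"
  shows "s i \<in> set_pmf M"
proof (rule ccontr)
  assume "s i \<notin> set_pmf M"
  hence z: "pmf M (s i) = 0" by (simp add: set_pmf_iff)
  have "\<bar>real (card {j. j < n \<and> s j = s i}) / real n - pmf M (s i)\<bar> \<le> eps * pmf M (s i)"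
    using assms(1) by (auto simp: typical_def)
  moreover have "finite {j. j < n \<and> s j = s i}" by simp
  moreover have "i \<in> {j. j < n \<and> s j = s i}" using assms(2) by simp
  ultimately have "card {j. j < n \<and> s j = s i} > 0" using card_gt_0_iff by blast
  hence "real (card {j. j < n \<and> s j = s i}) / real n > 0" using assms(2) by simp
  thus False using \<open>\<bar>real (card {j. j < n \<and> s j = s i}) / real n - pmf M (s i)\<bar> \<le> eps
      * pmf M (s i)\<close> z by simp
qed

lemma typical_sum_deviation:
  fixes h :: "'a \<Rightarrow> real"
  assumes fin: "finite (set_pmf M)" and s: "s \<in> typical M eps n" and n: "n > 0"
  shows "\<bar>(\<Sum>i<n. h (s i)) - real n * (\<Sum>a\<in>set_pmf M. pmf M a * h a)\<bar>
           \<le> real n * eps * (\<Sum>a\<in>set_pmf M. pmf M a * \<bar>h a\<bar>)"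
proof -
  have eq: "(\<Sum>i<n. h (s i)) = (\<Sum>a\<in>set_pmf M. real (card {i. i < n \<and> s i = a}) * h a)"
    by (rule sum_by_count[OF fin]) (use typical_in_support[OF s] in auto)
  have "\<bar>(\<Sum>a\<in>set_pmf M. real (card {i. i < n \<and> s i = a}) * h a) - real n
      * (\<Sum>a\<in>set_pmf M. pmf M a * h a)\<bar>
      = \<bar>\<Sum>a\<in>set_pmf M. (real (card {i. i < n \<and> s i = a}) - real n * pmf M a) * h a\<bar>"
    by (simp add: sum_subtractf sum_distrib_left algebra_simps)
  also have "\<dots> \<le> (\<Sum>a\<in>set_pmf M. \<bar>(real (card {i. i < n \<and> s i = a}) - real n * pmf M a) * h a\<bar>)"
    by (rule sum_abs)
  also have "\<dots> \<le> (\<Sum>a\<in>set_pmf M. real n * eps * (pmf M a * \<bar>h a\<bar>))"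
  proof (intro sum_mono)
    fix a
    define c where "c = real (card {i. i < n \<and> s i = a})"
    have t: "\<bar>real (card {i. i < n \<and> s i = a}) / real n - pmf M a\<bar> \<le> eps * pmf M a"
      using s by (auto simp: typical_def)
    have "\<bar>real (card {i. i < n \<and> s i = a}) - real n * pmf M a\<bar> = real n
        * \<bar>real (card {i. i < n \<and> s i = a}) / real n - pmf M a\<bar>"
      using n by (simp add: field_simps abs_mult[symmetric])
    also have "\<dots> \<le> real n * (eps * pmf M a)" using t by (intro mult_left_mono) auto
    finally have "\<bar>real (card {i. i < n \<and> s i = a}) - real n * pmf M a\<bar> \<le> real n * (eps * pmf M a)" .
    hence cc: "\<bar>c - real n * pmf M a\<bar> \<le> real n * (eps * pmf M a)" by (simp add: c_def)
    have "\<bar>(c - real n * pmf M a) * h a\<bar> = \<bar>c - real n * pmf M a\<bar> * \<bar>h a\<bar>" by (rule abs_mult)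
    also have "\<dots> \<le> real n * (eps * pmf M a) * \<bar>h a\<bar>" using cc by (intro mult_right_mono) auto
    also have "\<dots> = real n * eps * (pmf M a * \<bar>h a\<bar>)" by simp
    finally show "\<bar>(real (card {i. i < n \<and> s i = a}) - real n * pmf M a) * h a\<bar> \<le> real n * eps
        * (pmf M a * \<bar>h a\<bar>)"
      by (simp add: c_def)
  qed
  also have "\<dots> = real n * eps * (\<Sum>a\<in>set_pmf M. pmf M a * \<bar>h a\<bar>)" by (simp add: sum_distrib_left)
  finally show ?thesis using eq by simp
qed

lemma typical_cong:
  assumes "\<And>i. i < n \<Longrightarrow> s i = s' i"
  shows "s \<in> typical M e n \<longleftrightarrow> s' \<in> typical M e n"
proof -
  have "{i. i < n \<and> s i = a} = {i. i < n \<and> s' i = a}" for a using assms by auto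
  thus ?thesis by (simp add: typical_def)
qed

lemma finite_set_marg_UV:
  fixes p :: "('u::finite \<times> (nat \<Rightarrow> 'v::finite)) pmf"
  assumes "finite S"
  shows "finite (set_pmf (marg_UV p S))"
proof -
  have "set_pmf (marg_UV p S) \<subseteq> UNIV \<times> PiE S (\<lambda>_. UNIV)"
    by (auto simp: marg_UV_def)
  moreover have "finite ((UNIV::'u set) \<times> PiE S (\<lambda>_. (UNIV::'v set)))"
    using assms by (intro finite_cartesian_product finite_PiE) auto
  ultimately show ?thesis by (rule finite_subset)
qed

lemma marg_UV_restrict:
  assumes "S \<subseteq> T"
  shows "marg_UV p S = map_pmf (\<lambda>a. (fst a, restrict (snd a) S)) (marg_UV p T)"
  unfolding marg_UV_def map_pmf_comp
  using assms by (intro map_pmf_cong refl) (auto simp: restrict_def fun_eq_iff)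

lemma marg_V_eq_restrict_marg_UV:
  assumes "S \<subseteq> T"
  shows "marg_V p S = map_pmf (\<lambda>a. restrict (snd a) S) (marg_UV p T)"
  unfolding marg_UV_def marg_V_def map_pmf_comp
  using assms by (intro map_pmf_cong refl) (auto simp: restrict_def fun_eq_iff)

text \<open>For a joint symbol a = (u, v): cond_rest p k J a is the conditional probability of the levels
  outside J given u, v_0 and v_J, and gen_prob p A l v is the probability with which the codebook
  generates v l from v_{A_l} and v_0. log_ratio compares the two for the levels outside J.\<close>

definition proj_UV :: "nat set \<Rightarrow> ('u, 'v) joint_symbol \<Rightarrow> ('u, 'v) joint_symbol" where
  "proj_UV J a = (fst a, restrict (snd a) (insert 0 J))"

definition cond_rest :: "('u, 'v) joint_symbol pmf \<Rightarrow> nat \<Rightarrow> nat set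
    \<Rightarrow> ('u, 'v) joint_symbol \<Rightarrow> real" where
  "cond_rest p k J a = pmf (marg_UV p {0..k}) a / pmf (marg_UV p (insert 0 J)) (proj_UV J a)"

definition gen_prob :: "('u, 'v) joint_symbol pmf \<Rightarrow> (nat \<Rightarrow> nat set) \<Rightarrow> nat
    \<Rightarrow> (nat \<Rightarrow> 'v) \<Rightarrow> real" where
  "gen_prob p A l w = pmf (cond_V p (A l) l w (w 0)) (w l)"

definition log_ratio :: "('u, 'v) joint_symbol pmf \<Rightarrow> (nat \<Rightarrow> nat set) \<Rightarrow> nat
    \<Rightarrow> nat set \<Rightarrow> ('u, 'v) joint_symbol \<Rightarrow> real" where
  "log_ratio p A k J a = (\<Sum>l\<in>{1..k}-J. log 2 (gen_prob p A l (snd a))) - log 2 (cond_rest p k J a)"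

definition mean_log_ratio :: "('u, 'v) joint_symbol pmf \<Rightarrow> (nat \<Rightarrow> nat set) \<Rightarrow> nat
    \<Rightarrow> nat set \<Rightarrow> real" where
  "mean_log_ratio p A k J = (\<Sum>a\<in>set_pmf (marg_UV p {0..k}). pmf (marg_UV p {0..k}) a * log_ratio p A k J a)"

definition mean_abs_log_ratio :: "('u, 'v) joint_symbol pmf \<Rightarrow> (nat \<Rightarrow> nat set) \<Rightarrow> nat
    \<Rightarrow> nat set \<Rightarrow> real" where
  "mean_abs_log_ratio p A k J = (\<Sum>a\<in>set_pmf (marg_UV p {0..k}). pmf (marg_UV p {0..k}) a
      * \<bar>log_ratio p A k J a\<bar>)"

definition rate_margin :: "('u, 'v) joint_symbol pmf \<Rightarrow> (nat \<Rightarrow> nat set) \<Rightarrow> nat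
    \<Rightarrow> real
    \<Rightarrow> (nat \<Rightarrow> real) \<Rightarrow> nat set \<Rightarrow> real" where
  "rate_margin p A k eps r J = (\<Sum>j\<in>J. r j) - (mean_log_ratio p A k J - mean_log_ratio p A k {})
     - eps * (mean_abs_log_ratio p A k J + mean_abs_log_ratio p A k {})"

definition ancestral_sets :: "(nat \<Rightarrow> nat set) \<Rightarrow> nat \<Rightarrow> nat set set" where
  "ancestral_sets A k = {J. J \<subseteq> {1..k} \<and> J \<noteq> {} \<and> (\<forall>j\<in>J. A j \<subseteq> J)}"

lemma finite_ancestral_sets: "finite (ancestral_sets A k)"
  by (rule finite_subset[of _ "Pow {1..k}"]) (auto simp: ancestral_sets_def)

lemma set_pmf_marg_UV: "a \<in> set_pmf (marg_UV p S) \<longleftrightarrow>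
    (\<exists>x\<in>set_pmf p. a = (fst x, restrict (snd x) S))"
  by (auto simp: marg_UV_def case_prod_unfold)

lemma marg_UV_eq_map_proj_UV:
  assumes "J \<subseteq> {1..k}"
  shows "marg_UV p (insert 0 J) = map_pmf (proj_UV J) (marg_UV p {0..k})"
  unfolding proj_UV_def using assms by (intro marg_UV_restrict) auto

lemma pmf_marg_UV_proj_UV_pos:
  assumes "J \<subseteq> {1..k}" "a \<in> set_pmf (marg_UV p {0..k})"
  shows "pmf (marg_UV p (insert 0 J)) (proj_UV J a) > 0"
  using assms by (simp add: marg_UV_eq_map_proj_UV pmf_positive)

lemma cond_rest_pos:
  assumes "J \<subseteq> {1..k}" "a \<in> set_pmf (marg_UV p {0..k})"
  shows "cond_rest p k J a > 0"
  using pmf_marg_UV_proj_UV_pos[OF assms] assms(2) unfolding cond_rest_def by (simp add: pmf_positive)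

lemma prob_restrict_eq_pmf_marg_V:
  "measure_pmf.prob p {x. restrict (snd x) S = r} = pmf (marg_V p S) r"
  by (simp add: marg_V_def pmf_map case_prod_unfold vimage_def)

lemma gen_prob_eq_ratio:
  fixes p :: "('u::finite \<times> (nat \<Rightarrow> 'v::finite)) pmf"
  assumes a: "a \<in> set_pmf (marg_UV p {0..k})" and l: "l \<in> {1..k}" and Al: "A l \<subseteq> {1..k}"
  defines "S1 \<equiv> insert l (insert 0 (A l))" and "S2 \<equiv> insert 0 (A l)"
  shows "gen_prob p A l (snd a) = pmf (marg_V p S1) (restrict (snd a) S1) / pmf (marg_V p S2) (restrict (snd a) S2)"
    and "pmf (marg_V p S1) (restrict (snd a) S1) > 0"
    and "pmf (marg_V p S2) (restrict (snd a) S2) > 0"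
proof -
  obtain x0 where x0: "x0 \<in> set_pmf p" "a = (fst x0, restrict (snd x0) {0..k})"
    using a by (auto simp: set_pmf_marg_UV)
  define w where "w = snd a"
  have S1k: "S1 \<subseteq> {0..k}" and S2k: "S2 \<subseteq> {0..k}" using l Al by (auto simp: S1_def S2_def)
  have rw: "restrict (snd x0) S = restrict w S" if "S \<subseteq> {0..k}" for S
    using that x0 by (auto simp: w_def restrict_def fun_eq_iff)
  define E :: "('u \<times> (nat \<Rightarrow> 'v)) set" where "E = {x. (\<forall>b\<in>A l. snd x b = w b) \<and> snd x 0 = w 0}"
  have E_eq: "E = {x. restrict (snd x) S2 = restrict w S2}"
    by (auto simp: E_def S2_def restrict_def fun_eq_iff; metis insertCI)
  have E1_eq: "E \<inter> {x. snd x l = w l} = {x. restrict (snd x) S1 = restrict w S1}"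
    by (auto simp: E_def S1_def restrict_def fun_eq_iff; metis insertCI)
  have x0E: "x0 \<in> E" using rw[OF S2k] unfolding E_eq by simp
  hence ne: "set_pmf p \<inter> E \<noteq> {}" using x0 by auto
  have "gen_prob p A l (snd a) = pmf (map_pmf (\<lambda>x. snd x l) (cond_pmf p E)) (w l)"
    unfolding gen_prob_def cond_V_def Let_def using ne by (simp add: w_def E_def)
  also have "\<dots> = measure_pmf.prob p (E \<inter> {x. snd x l = w l}) / measure_pmf.prob p E"
    by (simp add: pmf_map measure_cond_pmf_eq[OF ne] vimage_def)
  also have "\<dots> = pmf (marg_V p S1) (restrict w S1) / pmf (marg_V p S2) (restrict w S2)"
    unfolding E1_eq by (simp add: E_eq prob_restrict_eq_pmf_marg_V)
  finally show "gen_prob p A l (snd a) = pmf (marg_V p S1) (restrict (snd a) S1) / pmf (marg_V p S2) (restrict (snd a) S2)"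
    by (simp add: w_def)
  have "restrict (snd x0) S1 \<in> set_pmf (marg_V p S1)" using x0 by (auto simp: marg_V_def case_prod_unfold)
  thus "pmf (marg_V p S1) (restrict (snd a) S1) > 0" using rw[OF S1k] by (simp add: w_def pmf_positive)
  have "restrict (snd x0) S2 \<in> set_pmf (marg_V p S2)" using x0 by (auto simp: marg_V_def case_prod_unfold)
  thus "pmf (marg_V p S2) (restrict (snd a) S2) > 0" using rw[OF S2k] by (simp add: w_def pmf_positive)
qed

lemma gen_prob_pos:
  fixes p :: "('u::finite \<times> (nat \<Rightarrow> 'v::finite)) pmf"
  assumes a: "a \<in> set_pmf (marg_UV p {0..k})" and l: "l \<in> {1..k}" and Al: "A l \<subseteq> {1..k}"
  shows "gen_prob p A l (snd a) > 0"
  using gen_prob_eq_ratio[of a p k l A] assms by simp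

lemma expect_log_gen_prob:
  fixes p :: "('u::finite \<times> (nat \<Rightarrow> 'v::finite)) pmf"
  assumes l: "l \<in> {1..k}" and Al: "A l \<subseteq> {1..k}"
  shows "(\<Sum>a\<in>set_pmf (marg_UV p {0..k}). pmf (marg_UV p {0..k}) a * log 2 (gen_prob p A l (snd a)))
           = - cond_ent_j p A l"
proof -
  define S1 where "S1 = insert l (insert 0 (A l))"
  define S2 where "S2 = insert 0 (A l)"
  let ?F = "marg_UV p {0..k}"
  have fin: "finite (set_pmf ?F)" by (rule finite_set_marg_UV) auto
  have S1k: "S1 \<subseteq> {0..k}" and S2k: "S2 \<subseteq> {0..k}" using l Al by (auto simp: S1_def S2_def)
  have "(\<Sum>a\<in>set_pmf ?F. pmf ?F a * log 2 (gen_prob p A l (snd a)))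
      = (\<Sum>a\<in>set_pmf ?F. pmf ?F a * log 2 (pmf (marg_V p S1) (restrict (snd a) S1))
                         - pmf ?F a * log 2 (pmf (marg_V p S2) (restrict (snd a) S2)))"
  proof (intro sum.cong refl)
    fix a assume a: "a \<in> set_pmf ?F"
    show "pmf ?F a * log 2 (gen_prob p A l (snd a)) = pmf ?F a * log 2 (pmf (marg_V p S1) (restrict (snd a) S1))
                         - pmf ?F a * log 2 (pmf (marg_V p S2) (restrict (snd a) S2))"
      using gen_prob_eq_ratio[of a p k l A] a l Al unfolding S1_def S2_def
      by (simp add: log_divide right_diff_distrib)
  qed
  also have "\<dots> = - entropy_pmf (marg_V p S1) + entropy_pmf (marg_V p S2)"
    unfolding sum_subtractf marg_V_eq_restrict_marg_UV[OF S1k] marg_V_eq_restrict_marg_UV[OF S2k] entropy_pmf_map[OF fin] by simp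
  finally show ?thesis by (simp add: cond_ent_j_def S1_def S2_def)
qed

lemma expect_log_marg_UV:
  fixes p :: "('u::finite \<times> (nat \<Rightarrow> 'v::finite)) pmf"
  assumes "J \<subseteq> {1..k}"
  shows "(\<Sum>a\<in>set_pmf (marg_UV p {0..k}). pmf (marg_UV p {0..k}) a * log 2 (pmf (marg_UV p (insert 0 J)) (proj_UV J a)))
           = - entropy_pmf (marg_UV p (insert 0 J))"
proof -
  have fin: "finite (set_pmf (marg_UV p {0..k}))" by (rule finite_set_marg_UV) auto
  show ?thesis unfolding marg_UV_eq_map_proj_UV[OF assms] entropy_pmf_map[OF fin] by simp
qed

lemma log_ratio_diff:
  fixes p :: "('u::finite \<times> (nat \<Rightarrow> 'v::finite)) pmf"
  assumes J: "J \<subseteq> {1..k}" and A_subset: "\<forall>j\<in>{1..k}. A j \<subseteq> {1..k}"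
    and a: "a \<in> set_pmf (marg_UV p {0..k})"
  shows "log_ratio p A k J a - log_ratio p A k {} a =
     - (\<Sum>l\<in>J. log 2 (gen_prob p A l (snd a))) + log 2 (pmf (marg_UV p (insert 0 J)) (proj_UV J a))
     - log 2 (pmf (marg_UV p (insert 0 {})) (proj_UV {} a))"
proof -
  have s: "(\<Sum>l\<in>{1..k}. log 2 (gen_prob p A l (snd a))) = (\<Sum>l\<in>{1..k}-J. log 2 (gen_prob p A l (snd a)))
      + (\<Sum>l\<in>J. log 2 (gen_prob p A l (snd a)))"
    using J by (metis add.commute finite_atLeastAtMost sum.subset_diff)
  have pos1: "pmf (marg_UV p {0..k}) a > 0" using a by (simp add: pmf_positive)
  have pos2: "pmf (marg_UV p (insert 0 J)) (proj_UV J a) > 0" by (rule pmf_marg_UV_proj_UV_pos[OF J a])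
  have pos3: "pmf (marg_UV p (insert 0 {})) (proj_UV {} a) > 0" by (rule pmf_marg_UV_proj_UV_pos[OF _ a]) auto
  show ?thesis
    unfolding log_ratio_def cond_rest_def using s pos1 pos2 pos3 by (simp add: log_divide)
qed

lemma expect_log_ratio_diff:
  fixes p :: "('u::finite \<times> (nat \<Rightarrow> 'v::finite)) pmf"
  assumes J: "J \<subseteq> {1..k}" and A_subset: "\<forall>j\<in>{1..k}. A j \<subseteq> {1..k}"
  shows "mean_log_ratio p A k J - mean_log_ratio p A k {} = (\<Sum>j\<in>J. cond_ent_j p A j) - cond_ent_J p J"
proof -
  let ?F = "marg_UV p {0..k}"
  have "mean_log_ratio p A k J - mean_log_ratio p A k {}
      = (\<Sum>a\<in>set_pmf ?F. pmf ?F a * (log_ratio p A k J a - log_ratio p A k {} a))"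
    by (simp add: mean_log_ratio_def sum_subtractf right_diff_distrib)
  also have "\<dots> = (\<Sum>a\<in>set_pmf ?F. - (\<Sum>l\<in>J. pmf ?F a * log 2 (gen_prob p A l (snd a)))
         + pmf ?F a * log 2 (pmf (marg_UV p (insert 0 J)) (proj_UV J a))
         - pmf ?F a * log 2 (pmf (marg_UV p (insert 0 {})) (proj_UV {} a)))"
    by (intro sum.cong refl, subst log_ratio_diff[OF J A_subset], assumption)
       (simp add: algebra_simps sum_distrib_left)
  also have "\<dots> = - (\<Sum>l\<in>J. \<Sum>a\<in>set_pmf ?F. pmf ?F a * log 2 (gen_prob p A l (snd a)))
     + (\<Sum>a\<in>set_pmf ?F. pmf ?F a * log 2 (pmf (marg_UV p (insert 0 J)) (proj_UV J a)))
     - (\<Sum>a\<in>set_pmf ?F. pmf ?F a * log 2 (pmf (marg_UV p (insert 0 {})) (proj_UV {} a)))"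
    by (simp add: sum_subtractf sum.distrib sum_negf sum.swap[of _ J])
  also have "(\<Sum>l\<in>J. \<Sum>a\<in>set_pmf ?F. pmf ?F a * log 2 (gen_prob p A l (snd a)))
      = (\<Sum>l\<in>J. - cond_ent_j p A l)"
    using J A_subset by (intro sum.cong refl expect_log_gen_prob) auto
  also have "(\<Sum>a\<in>set_pmf ?F. pmf ?F a * log 2 (pmf (marg_UV p (insert 0 J)) (proj_UV J a))) =
      - entropy_pmf (marg_UV p (insert 0 J))"
    by (rule expect_log_marg_UV[OF J])
  also have "(\<Sum>a\<in>set_pmf ?F. pmf ?F a * log 2 (pmf (marg_UV p (insert 0 {})) (proj_UV {} a))) =
      - entropy_pmf (marg_UV p (insert 0 {}))"
    by (rule expect_log_marg_UV) auto
  finally show ?thesis by (simp add: cond_ent_J_def sum_negf)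
qed

lemma cond_V_cong:
  assumes "\<And>a. a \<in> B \<Longrightarrow> w a = w' a"
  shows "cond_V p B j w v0 = cond_V p B j w' v0"
  unfolding cond_V_def using assms by (simp cong: conj_cong)

lemma gen_prob_cong:
  assumes "\<And>a. a \<in> insert 0 (insert l (A l)) \<Longrightarrow> w a = w' a"
  shows "gen_prob p A l w = gen_prob p A l w'"
proof -
  have "cond_V p (A l) l w (w 0) = cond_V p (A l) l w' (w' 0)"
    using assms by (auto intro!: cond_V_cong)
  thus ?thesis unfolding gen_prob_def using assms by simp
qed

text \<open>The rows (v_0, codewords up to level j) of two message tuples m, m'. Their joint law is
  computed by induction on j; pair_weight is the resulting pmf.\<close>

locale codeword_pair =
  fixes p :: "('u::finite \<times> (nat \<Rightarrow> 'v::finite)) pmf"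
    and A :: "nat \<Rightarrow> nat set" and k :: nat and L :: "nat \<Rightarrow> nat" and n :: nat
    and vs :: "nat \<Rightarrow> 'v" and m :: "nat \<Rightarrow> nat" and m' :: "nat \<Rightarrow> nat"
  assumes A_sub: "\<forall>j\<in>{1..k}. A j \<subseteq> {1..<j}"
    and A_cl: "\<forall>j\<in>{1..k}. \<forall>i\<in>A j. A i \<subseteq> A j"
    and m_in: "m \<in> msgs L k" and m'_in: "m' \<in> msgs L k"
begin

definition index_m :: "nat \<Rightarrow> nat \<Rightarrow> nat" where "index_m l = restrict m (insert l (A l))"
definition index_m' :: "nat \<Rightarrow> nat \<Rightarrow> nat" where "index_m' l = restrict m' (insert l (A l))"

definition row :: "nat \<Rightarrow> (nat \<Rightarrow> nat) \<Rightarrow> 'v codebook \<Rightarrow> nat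
    \<Rightarrow> nat \<Rightarrow> 'v" where
  "row j mm c i = restrict (\<lambda>l. if l = 0 then vs i else c l (restrict mm (insert l (A l))) i) {0..j}"

definition pair_rows :: "nat \<Rightarrow> 'v codebook \<Rightarrow> 'v rows \<times> 'v rows" where
  "pair_rows j c = (restrict (row j m c) {..<n}, restrict (row j m' c) {..<n})"

text \<open>If both tuples index the same level-l codeword, it is drawn only once and its generation
  probability is counted once.\<close>

definition level_weight :: "nat \<Rightarrow> 'v rows \<times> 'v rows \<Rightarrow> nat \<Rightarrow> real" where
  "level_weight l d i = gen_prob p A l (fst d i) *
      (if index_m l = index_m' l then (if snd d i l = fst d i l then 1 else 0) else gen_prob p A l (snd d i))"

definition pair_weight :: "nat \<Rightarrow> 'v rows \<times> 'v rows \<Rightarrow> real" where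
  "pair_weight j d = (\<Prod>i<n. \<Prod>l\<in>{1..j}. level_weight l d i)"

definition row_space :: "nat \<Rightarrow> nat \<Rightarrow> (nat \<Rightarrow> 'v) set" where
  "row_space j i = {w \<in> PiE {0..j} (\<lambda>_. UNIV). w 0 = vs i}"

definition pair_space :: "nat \<Rightarrow> ('v rows \<times> 'v rows) set" where
  "pair_space j = PiE {..<n} (row_space j) \<times> PiE {..<n} (row_space j)"

definition truncate_pair :: "nat \<Rightarrow> 'v rows \<times> 'v rows \<Rightarrow> 'v rows \<times> 'v rows" where
  "truncate_pair j z = (\<lambda>i\<in>{..<n}. restrict (fst z i) {0..j}, \<lambda>i\<in>{..<n}. restrict (snd z i) {0..j})"

definition extend_pair :: "nat \<Rightarrow> 'v rows \<times> 'v rows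
    \<Rightarrow> ((nat \<Rightarrow> nat) \<times> nat \<Rightarrow> 'v)
    \<Rightarrow> 'v rows \<times> 'v rows" where
  "extend_pair j d f = (\<lambda>i\<in>{..<n}. (fst d i)(Suc j := f (index_m (Suc j), i)), \<lambda>i\<in>{..<n}.
      (snd d i)(Suc j := f (index_m' (Suc j), i)))"

lemma finite_row_space: "finite (row_space j i)"
proof -
  have "finite (PiE {0..j} (\<lambda>_. (UNIV :: 'v set)))" by (intro finite_PiE) auto
  thus ?thesis unfolding row_space_def by simp
qed

lemma finite_pair_space: "finite (pair_space j)"
  unfolding pair_space_def by (intro finite_cartesian_product finite_PiE finite_row_space) auto

lemma pair_rows_fun_upd:
  "pair_rows (Suc j) (c(Suc j := (\<lambda>mm i. f (mm, i)))) = extend_pair j (pair_rows j c) f"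
  unfolding pair_rows_def extend_pair_def
  by (auto simp: row_def fun_eq_iff restrict_def index_m_def index_m'_def)

lemma truncate_extend_pair:
  assumes "d \<in> pair_space j"
  shows "truncate_pair j (extend_pair j d f) = d"
  using assms unfolding pair_space_def row_space_def truncate_pair_def extend_pair_def
  by (auto simp: fun_eq_iff restrict_def PiE_def extensional_def Pi_def)

lemma extend_pair_in_pair_space:
  assumes "d \<in> pair_space j"
  shows "extend_pair j d f \<in> pair_space (Suc j)"
  using assms unfolding pair_space_def row_space_def extend_pair_def
  by (auto simp: PiE_def extensional_def Pi_def)

lemma truncate_pair_in_pair_space:
  assumes "z \<in> pair_space (Suc j)"
  shows "truncate_pair j z \<in> pair_space j"
  using assms unfolding pair_space_def row_space_def truncate_pair_def
  by (auto simp: PiE_def extensional_def Pi_def)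

lemma restrict_fun_upd_eq:
  assumes "w \<in> extensional {0..Suc j}"
  shows "(restrict w {0..j})(Suc j := w (Suc j)) = w"
  using assms by (auto simp: fun_eq_iff extensional_def restrict_def)

lemma A_in: "j \<in> {1..k} \<Longrightarrow> A j \<subseteq> {1..<j}" using A_sub by blast

lemma level_weight_truncate:
  assumes "z \<in> pair_space (Suc j)" "l \<in> {1..j}" "Suc j \<le> k" "i < n"
  shows "level_weight l (truncate_pair j z) i = level_weight l z i"
proof -
  have Al: "A l \<subseteq> {1..<l}" using A_in[of l] assms by auto
  have "gen_prob p A l (restrict (fst z i) {0..j}) = gen_prob p A l (fst z i)"
    using Al assms(2) by (intro gen_prob_cong) auto
  moreover have "gen_prob p A l (restrict (snd z i) {0..j}) = gen_prob p A l (snd z i)"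
    using Al assms(2) by (intro gen_prob_cong) auto
  ultimately show ?thesis using assms unfolding level_weight_def truncate_pair_def by auto
qed

lemma pair_weight_Suc:
  assumes z: "z \<in> pair_space (Suc j)" and jk: "Suc j \<le> k"
  shows "pair_weight (Suc j) z = pair_weight j (truncate_pair j z) * (\<Prod>i<n. level_weight (Suc j) z i)"
proof -
  have "pair_weight (Suc j) z = (\<Prod>i<n. level_weight (Suc j) z i * (\<Prod>l\<in>{1..j}. level_weight l z i))"
    unfolding pair_weight_def by (intro prod.cong refl) (simp add: atLeastAtMostSuc_conv)
  also have "\<dots> = (\<Prod>i<n. level_weight (Suc j) z i) * (\<Prod>i<n. \<Prod>l\<in>{1..j}. level_weight l z i)"
    by (simp add: prod.distrib)
  also have "(\<Prod>i<n. \<Prod>l\<in>{1..j}. level_weight l z i) = pair_weight j (truncate_pair j z)"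
    unfolding pair_weight_def using level_weight_truncate[OF z _ jk] by (intro prod.cong refl) auto
  finally show ?thesis by simp
qed

definition new_draws :: "nat \<Rightarrow> ((nat \<Rightarrow> nat) \<times> nat) set" where
  "new_draws j = {index_m (Suc j), index_m' (Suc j)} \<times> {..<n}"

definition draw_dist :: "nat \<Rightarrow> 'v rows \<times> 'v rows \<Rightarrow> (nat \<Rightarrow> nat) \<times> nat
    \<Rightarrow> 'v pmf" where
  "draw_dist j d x = cond_V p (A (Suc j)) (Suc j)
      (if fst x = index_m (Suc j) then fst d (snd x) else snd d (snd x)) (vs (snd x))"

lemma finite_new_draws: "finite (new_draws j)" unfolding new_draws_def by auto

definition read_draws :: "nat \<Rightarrow> 'v rows \<times> 'v rows \<Rightarrow> (nat \<Rightarrow> nat) \<times> nat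
    \<Rightarrow> 'v" where
  "read_draws j z x = (if x \<in> new_draws j then
     (if fst x = index_m (Suc j) then fst z (snd x) (Suc j) else snd z (snd x) (Suc j)) else undefined)"

lemma extend_pair_preimage_empty:
  assumes d: "d \<in> pair_space j"
    and z: "\<not> (z \<in> pair_space (Suc j) \<and> d = truncate_pair j z)
      \<or> (index_m (Suc j) = index_m' (Suc j) \<and> (\<exists>i<n. snd z i (Suc j) \<noteq> fst z i (Suc j)))"
  shows "extend_pair j d -` {z} = {}"
proof (intro equalityI subsetI)
  fix f assume "f \<in> extend_pair j d -` {z}"
  hence f: "extend_pair j d f = z" by simp
  show "f \<in> {}"
  proof (cases "z \<in> pair_space (Suc j) \<and> d = truncate_pair j z")
    case False
    thus ?thesis using f extend_pair_in_pair_space[OF d, of f] truncate_extend_pair[OF d, of f] by metis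
  next
    case True
    then obtain i where "index_m (Suc j) = index_m' (Suc j)" "i < n" "snd z i (Suc j) \<noteq> fst z i (Suc j)"
      using z by blast
    with f show ?thesis by (auto simp: extend_pair_def)
  qed
qed simp

lemma extend_pair_read_draws:
  assumes z: "z \<in> pair_space (Suc j)"
    and cons: "index_m (Suc j) = index_m' (Suc j) \<longrightarrow> (\<forall>i<n. snd z i (Suc j) = fst z i (Suc j))"
  shows "extend_pair j (truncate_pair j z) (read_draws j z) = z"
proof -
  have zf: "fst z \<in> PiE {..<n} (row_space (Suc j))" and zs: "snd z \<in> PiE {..<n} (row_space (Suc j))"
    using z unfolding pair_space_def by (simp_all add: mem_Times_iff)
  have row_eq: "(restrict (w i) {0..j})(Suc j := w i (Suc j)) = w i"
    if "w \<in> PiE {..<n} (row_space (Suc j))" "i < n" for w i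
    using that by (intro restrict_fun_upd_eq) (auto simp: row_space_def PiE_def)
  have cons': "fst z i (Suc j) = snd z i (Suc j)" if "index_m (Suc j) = index_m' (Suc j)" "i < n" for i
    using cons that by simp
  have "fst (extend_pair j (truncate_pair j z) (read_draws j z)) i = fst z i" for i
    using zf row_eq[OF zf, of i]
    by (cases "i < n") (auto simp: extend_pair_def truncate_pair_def read_draws_def new_draws_def PiE_def extensional_def)
  moreover have "snd (extend_pair j (truncate_pair j z) (read_draws j z)) i = snd z i" for i
    using zs row_eq[OF zs, of i] cons'
    by (cases "i < n") (auto simp: extend_pair_def truncate_pair_def read_draws_def new_draws_def PiE_def extensional_def)
  ultimately show ?thesis by (simp add: prod_eq_iff fun_eq_iff)
qed

lemma extend_pair_preimage:
  assumes z: "z \<in> pair_space (Suc j)"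
    and cons: "index_m (Suc j) = index_m' (Suc j) \<longrightarrow> (\<forall>i<n. snd z i (Suc j) = fst z i (Suc j))"
  shows "extend_pair j (truncate_pair j z) -` {z} \<inter> {f. \<forall>x. x \<notin> new_draws j \<longrightarrow> f x
      = undefined}
    = {read_draws j z}"
proof (intro equalityI subsetI)
  fix f assume "f \<in> extend_pair j (truncate_pair j z) -` {z} \<inter>
      {f. \<forall>x. x \<notin> new_draws j \<longrightarrow> f x = undefined}"
  hence fz: "extend_pair j (truncate_pair j z) f = z" and fD: "\<forall>x. x \<notin> new_draws j \<longrightarrow> f x
      = undefined"
    by auto
  have "f x = read_draws j z x" for x
  proof (cases "x \<in> new_draws j")
    case True
    then obtain mm i where x: "x = (mm, i)" "mm = index_m (Suc j) \<or> mm = index_m' (Suc j)" "i < n"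
      by (auto simp: new_draws_def)
    have "fst (extend_pair j (truncate_pair j z) f) i (Suc j) = f (index_m (Suc j), i)"
      "snd (extend_pair j (truncate_pair j z) f) i (Suc j) = f (index_m' (Suc j), i)"
      using x(3) by (simp_all add: extend_pair_def)
    hence "fst z i (Suc j) = f (index_m (Suc j), i)" "snd z i (Suc j) = f (index_m' (Suc j), i)"
      unfolding fz .
    thus ?thesis using x True by (auto simp: read_draws_def)
  next
    case False thus ?thesis using fD[rule_format, of x] by (simp add: read_draws_def)
  qed
  thus "f \<in> {read_draws j z}" by auto
qed (use extend_pair_read_draws[OF assms] in \<open>auto simp: read_draws_def\<close>)

lemma pmf_draw_dist_read_draws:
  assumes z: "z \<in> pair_space (Suc j)" and jk: "Suc j \<le> k" and i: "i < n"
  shows "pmf (cond_V p (A (Suc j)) (Suc j) (fst (truncate_pair j z) i) (vs i)) (fst z i (Suc j))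
           = gen_prob p A (Suc j) (fst z i)"
    and "pmf (cond_V p (A (Suc j)) (Suc j) (snd (truncate_pair j z) i) (vs i)) (snd z i (Suc j))
           = gen_prob p A (Suc j) (snd z i)"
proof -
  have AJ: "A (Suc j) \<subseteq> {1..<Suc j}" using A_in[of "Suc j"] jk by auto
  have "fst z \<in> PiE {..<n} (row_space (Suc j))" "snd z \<in> PiE {..<n} (row_space (Suc j))"
    using z unfolding pair_space_def by (simp_all add: mem_Times_iff)
  hence "fst z i \<in> row_space (Suc j) i" "snd z i \<in> row_space (Suc j) i" using i by auto
  hence z0: "fst z i 0 = vs i" "snd z i 0 = vs i" by (auto simp: row_space_def)
  have agree: "fst (truncate_pair j z) i a = fst z i a" "snd (truncate_pair j z) i a = snd z i a"
    if "a \<in> A (Suc j)" for a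
  proof -
    have "a \<in> {0..j}" using that AJ by auto
    thus "fst (truncate_pair j z) i a = fst z i a" "snd (truncate_pair j z) i a = snd z i a"
      using i by (simp_all add: truncate_pair_def)
  qed
  have "cond_V p (A (Suc j)) (Suc j) (fst (truncate_pair j z) i) (vs i)
      = cond_V p (A (Suc j)) (Suc j) (fst z i) (fst z i 0)"
    unfolding z0 by (rule cond_V_cong) (rule agree(1))
  thus "pmf (cond_V p (A (Suc j)) (Suc j) (fst (truncate_pair j z) i) (vs i)) (fst z i (Suc j))
      = gen_prob p A (Suc j) (fst z i)" by (simp add: gen_prob_def)
  have "cond_V p (A (Suc j)) (Suc j) (snd (truncate_pair j z) i) (vs i)
      = cond_V p (A (Suc j)) (Suc j) (snd z i) (snd z i 0)"
    unfolding z0 by (rule cond_V_cong) (rule agree(2))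
  thus "pmf (cond_V p (A (Suc j)) (Suc j) (snd (truncate_pair j z) i) (vs i)) (snd z i (Suc j))
      = gen_prob p A (Suc j) (snd z i)" by (simp add: gen_prob_def)
qed

lemma prod_pmf_draw_dist:
  assumes z: "z \<in> pair_space (Suc j)" and jk: "Suc j \<le> k"
    and cons: "index_m (Suc j) = index_m' (Suc j) \<longrightarrow> (\<forall>i<n. snd z i (Suc j) = fst z i (Suc j))"
  shows "(\<Prod>x\<in>new_draws j. pmf (draw_dist j (truncate_pair j z) x) (read_draws j z x))
    = (\<Prod>i<n. level_weight (Suc j) z i)"
proof -
  let ?h = "\<lambda>x. pmf (draw_dist j (truncate_pair j z) x) (read_draws j z x)"
  have split: "(\<Prod>x\<in>new_draws j. ?h x) = (\<Prod>mm\<in>{index_m (Suc j), index_m' (Suc j)}. \<Prod>i<n. ?h (mm, i))"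
    by (simp add: new_draws_def prod.cartesian_product)
  show ?thesis
  proof (cases "index_m (Suc j) = index_m' (Suc j)")
    case True
    have "(\<Prod>x\<in>new_draws j. ?h x) = (\<Prod>i<n. ?h (index_m (Suc j), i))"
      using True by (simp add: split)
    also have "\<dots> = (\<Prod>i<n. level_weight (Suc j) z i)"
      using True cons pmf_draw_dist_read_draws(1)[OF z jk]
      by (intro prod.cong refl) (simp add: draw_dist_def read_draws_def new_draws_def level_weight_def)
    finally show ?thesis .
  next
    case False
    have "(\<Prod>x\<in>new_draws j. ?h x) = (\<Prod>i<n. ?h (index_m (Suc j), i)) * (\<Prod>i<n. ?h (index_m' (Suc j), i))"
      using False by (simp add: split)
    also have "\<dots> = (\<Prod>i<n. level_weight (Suc j) z i)"
      unfolding prod.distrib[symmetric]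
      using False pmf_draw_dist_read_draws[OF z jk]
      by (intro prod.cong refl) (simp add: draw_dist_def read_draws_def new_draws_def level_weight_def)
    finally show ?thesis .
  qed
qed

lemma pmf_extend_step:
  assumes d: "d \<in> pair_space j" and jk: "Suc j \<le> k"
  shows "pmf (map_pmf (extend_pair j d) (Pi_pmf (new_draws j) undefined (draw_dist j d))) z =
     (if z \<in> pair_space (Suc j) \<and> d = truncate_pair j z then (\<Prod>i<n. level_weight (Suc j) z i) else 0)"
proof -
  let ?M = "Pi_pmf (new_draws j) undefined (draw_dist j d)"
  have eq0: "pmf (map_pmf (extend_pair j d) ?M) z
      = measure ?M (extend_pair j d -` {z} \<inter> {f. \<forall>x. x \<notin> new_draws j \<longrightarrow> f x = undefined})"
    by (rule pmf_map_Pi_pmf[OF finite_new_draws])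
  consider (outside) "\<not> (z \<in> pair_space (Suc j) \<and> d = truncate_pair j z)"
    | (clash) "z \<in> pair_space (Suc j)" "d = truncate_pair j z"
        "index_m (Suc j) = index_m' (Suc j)" "\<exists>i<n. snd z i (Suc j) \<noteq> fst z i (Suc j)"
    | (ok) "z \<in> pair_space (Suc j)" "d = truncate_pair j z"
        "index_m (Suc j) = index_m' (Suc j) \<longrightarrow> (\<forall>i<n. snd z i (Suc j) = fst z i (Suc j))"
    by blast
  then show ?thesis
  proof cases
    case outside
    hence "extend_pair j d -` {z} = {}" by (intro extend_pair_preimage_empty[OF d]) simp
    thus ?thesis unfolding if_not_P[OF outside] using eq0 by simp
  next
    case clash
    then obtain i where "i < n" "snd z i (Suc j) \<noteq> fst z i (Suc j)" by blast
    with clash have "(\<Prod>i<n. level_weight (Suc j) z i) = 0"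
      by (intro prod_zero bexI[of _ i]) (auto simp: level_weight_def)
    moreover have "extend_pair j d -` {z} = {}" using clash by (intro extend_pair_preimage_empty[OF d]) simp
    ultimately show ?thesis unfolding if_P[OF conjI[OF clash(1,2)]] using eq0 by simp
  next
    case ok
    have "pmf (map_pmf (extend_pair j d) ?M) z = pmf ?M (read_draws j z)"
      using eq0 extend_pair_preimage[OF ok(1,3)] ok(2) by (simp add: measure_pmf_single)
    also have "\<dots> = (\<Prod>x\<in>new_draws j. pmf (draw_dist j d x) (read_draws j z x))"
      by (rule pmf_Pi'[OF finite_new_draws]) (simp add: read_draws_def)
    also have "\<dots> = (\<Prod>i<n. level_weight (Suc j) z i)"
      using prod_pmf_draw_dist[OF ok(1) jk ok(3)] ok(2) by simp
    finally show ?thesis using ok by simp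
  qed
qed

lemma index_m_in_idx:
  assumes "l \<in> {1..k}"
  shows "index_m l \<in> idx A L l" "index_m' l \<in> idx A L l"
proof -
  have sub: "insert l (A l) \<subseteq> {1..k}" using A_in[OF assms] assms by auto
  show "index_m l \<in> idx A L l" using m_in sub unfolding index_m_def idx_def msgs_def by (auto simp: PiE_def Pi_def)
  show "index_m' l \<in> idx A L l" using m'_in sub unfolding index_m'_def idx_def msgs_def by (auto simp: PiE_def Pi_def)
qed

lemma finite_idx:
  assumes "l \<in> {1..k}"
  shows "finite (idx A L l)"
proof -
  have "finite (A l)" using A_in[OF assms] by (rule finite_subset) auto
  thus ?thesis unfolding idx_def by (intro finite_PiE) auto
qed

lemma extend_pair_restrict:
  "extend_pair j d f = extend_pair j d (\<lambda>x. if x \<in> new_draws j then f x else undefined)"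
  unfolding extend_pair_def new_draws_def by (auto simp: fun_eq_iff restrict_def)

lemma row_in_A:
  assumes "a \<in> A (Suc j)" "Suc j \<le> k" and mmdef: "mm = m \<or> mm = m'"
  shows "row j mm c i a = c a (restrict (restrict mm (insert (Suc j) (A (Suc j)))) (insert a (A a))) i"
proof -
  have AJ: "A (Suc j) \<subseteq> {1..<Suc j}" using A_in[of "Suc j"] assms by auto
  have "A a \<subseteq> A (Suc j)" using A_cl assms by auto
  hence sub: "insert a (A a) \<subseteq> insert (Suc j) (A (Suc j))" using assms by auto
  have "restrict (restrict mm (insert (Suc j) (A (Suc j)))) (insert a (A a)) = restrict mm (insert a (A a))"
    using sub by (auto simp: fun_eq_iff restrict_def)
  moreover have "a \<in> {0..j}" "a \<noteq> 0" using AJ assms by auto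
  ultimately show ?thesis by (simp add: row_def)
qed

lemma pair_rows_canon_cb_Suc:
  assumes jk: "Suc j \<le> k"
  shows "map_pmf (pair_rows (Suc j)) (canon_cb p A L n vs (Suc j)) =
     map_pmf (pair_rows j) (canon_cb p A L n vs j) \<bind> (\<lambda>d. map_pmf (extend_pair j d)
         (Pi_pmf (new_draws j) undefined (draw_dist j d)))"
proof -
  define J1 where "J1 = Suc j"
  let ?I = "idx A L (Suc j) \<times> {..<n}"
  have finI: "finite ?I" using finite_idx[of "Suc j"] jk by auto
  have subI: "new_draws j \<subseteq> ?I" using index_m_in_idx[of "Suc j"] jk by (auto simp: new_draws_def)
  have step: "map_pmf (pair_rows (Suc j)) (gen_level p A L n (Suc j) vs c)
      = map_pmf (extend_pair j (pair_rows j c)) (Pi_pmf (new_draws j) undefined (draw_dist j (pair_rows j c)))" for c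
  proof -
    let ?par = "\<lambda>(mm, i). cond_V p (A (Suc j)) (Suc j) (\<lambda>a. c a (restrict mm (insert a (A a))) i) (vs i)"
    have "map_pmf (pair_rows (Suc j)) (gen_level p A L n (Suc j) vs c)
        = map_pmf (extend_pair j (pair_rows j c)) (Pi_pmf ?I undefined ?par)"
      unfolding gen_level_def map_pmf_comp o_def pair_rows_fun_upd ..
    also have "\<dots> = map_pmf (extend_pair j (pair_rows j c))
        (map_pmf (\<lambda>f x. if x \<in> new_draws j then f x else undefined) (Pi_pmf ?I undefined ?par))"
      unfolding map_pmf_comp o_def by (intro map_pmf_cong refl extend_pair_restrict)
    also have "\<dots> = map_pmf (extend_pair j (pair_rows j c)) (Pi_pmf (new_draws j) undefined ?par)"
      by (subst Pi_pmf_subset[OF finI subI]) (rule refl)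
    also have "Pi_pmf (new_draws j) undefined ?par = Pi_pmf (new_draws j) undefined (draw_dist j (pair_rows j c))"
    proof (rule Pi_pmf_cong[OF refl refl])
      fix x assume x: "x \<in> new_draws j"
      then obtain mm i where xe: "x = (mm, i)" and mm: "mm = index_m (Suc j) \<or> mm = index_m' (Suc j)" and i: "i < n"
        by (auto simp: new_draws_def)
      show "?par x = draw_dist j (pair_rows j c) x"
      proof (cases "mm = index_m (Suc j)")
        case True
        have "cond_V p (A (Suc j)) (Suc j) (\<lambda>a. c a (restrict mm (insert a (A a))) i) (vs i)
            = cond_V p (A (Suc j)) (Suc j) (fst (pair_rows j c) i) (vs i)"
          using i row_in_A[OF _ jk, of _ m c i] True
          by (intro cond_V_cong) (simp add: pair_rows_def index_m_def)
        thus ?thesis using True by (simp add: xe draw_dist_def)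
      next
        case False
        hence mm': "mm = index_m' (Suc j)" using mm by auto
        have "cond_V p (A (Suc j)) (Suc j) (\<lambda>a. c a (restrict mm (insert a (A a))) i) (vs i)
            = cond_V p (A (Suc j)) (Suc j) (snd (pair_rows j c) i) (vs i)"
          using i row_in_A[OF _ jk, of _ m' c i] mm'
          by (intro cond_V_cong) (simp add: pair_rows_def index_m'_def)
        thus ?thesis using False by (simp add: xe draw_dist_def)
      qed
    qed
    finally show ?thesis .
  qed
  show ?thesis
    by (simp add: map_bind_pmf bind_map_pmf step)
qed

lemma pair_space_0: "d \<in> pair_space 0 \<longleftrightarrow> d = pair_rows 0 c"
proof
  assume d: "d \<in> pair_space 0"
  have "fst d = fst (pair_rows 0 c)" "snd d = snd (pair_rows 0 c)"
    using d by (auto simp: pair_space_def row_space_def pair_rows_def row_def fun_eq_iff PiE_def extensional_def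
        restrict_def Pi_def)
  thus "d = pair_rows 0 c" by (simp add: prod_eq_iff)
next
  assume "d = pair_rows 0 c"
  thus "d \<in> pair_space 0" by (auto simp: pair_space_def row_space_def pair_rows_def row_def)
qed

lemma pmf_pair_rows:
  assumes "j \<le> k"
  shows "pmf (map_pmf (pair_rows j) (canon_cb p A L n vs j)) d = (if d \<in> pair_space j then pair_weight j d else 0)"
  using assms
proof (induction j arbitrary: d)
  case 0
  show ?case using pair_space_0[of d "\<lambda>j m i. undefined"]
    by (auto simp: pair_weight_def indicator_def)
next
  case (Suc j)
  let ?M = "map_pmf (pair_rows j) (canon_cb p A L n vs j)"
  let ?K = "\<lambda>d. map_pmf (extend_pair j d) (Pi_pmf (new_draws j) undefined (draw_dist j d))"
  have IH: "pmf ?M d = (if d \<in> pair_space j then pair_weight j d else 0)" for d using Suc by auto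
  have supp: "set_pmf ?M \<subseteq> pair_space j"
  proof
    fix x assume "x \<in> set_pmf ?M"
    hence "pmf ?M x \<noteq> 0" by (simp add: set_pmf_eq)
    thus "x \<in> pair_space j" using IH[of x] by (auto split: if_splits)
  qed
  have "pmf (map_pmf (pair_rows (Suc j)) (canon_cb p A L n vs (Suc j))) d = pmf (?M \<bind> ?K) d"
    using pair_rows_canon_cb_Suc[OF Suc.prems] by simp
  also have "\<dots> = (\<integral>x. pmf (?K x) d \<partial>measure_pmf ?M)" by (rule pmf_bind)
  also have "\<dots> = (\<Sum>x\<in>pair_space j. pmf (?K x) d * pmf ?M x)"
    by (rule integral_measure_pmf_real[OF finite_pair_space]) (use supp in auto)
  also have "\<dots> = (\<Sum>x\<in>pair_space j. (if d \<in> pair_space (Suc j) \<and> x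
      = truncate_pair j d then (\<Prod>i<n. level_weight (Suc j) d i) else 0) * pair_weight j x)"
    using IH Suc.prems by (intro sum.cong refl) (simp add: pmf_extend_step)
  also have "\<dots> = (if d \<in> pair_space (Suc j) then (\<Prod>i<n. level_weight (Suc j) d i)
      * pair_weight j (truncate_pair j d) else 0)"
  proof (cases "d \<in> pair_space (Suc j)")
    case True
    have "(\<Sum>x\<in>pair_space j. (if d \<in> pair_space (Suc j) \<and> x
        = truncate_pair j d then (\<Prod>i<n. level_weight (Suc j) d i) else 0) * pair_weight j x)
        = (\<Sum>x\<in>pair_space j. if x = truncate_pair j d then (\<Prod>i<n. level_weight (Suc j) d i)
            * pair_weight j x else 0)"
      using True by (intro sum.cong refl) auto
    also have "\<dots> = (\<Prod>i<n. level_weight (Suc j) d i) * pair_weight j (truncate_pair j d)"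
      using truncate_pair_in_pair_space[OF True] finite_pair_space by (simp add: sum.delta')
    finally show ?thesis using True by simp
  qed simp
  also have "\<dots> = (if d \<in> pair_space (Suc j) then pair_weight (Suc j) d else 0)"
    using pair_weight_Suc[of d j] Suc.prems by (auto simp: mult.commute)
  finally show ?case .
qed
lemma set_pmf_pair_rows:
  assumes "j \<le> k"
  shows "set_pmf (map_pmf (pair_rows j) (canon_cb p A L n vs j)) \<subseteq> pair_space j"
proof
  fix d assume "d \<in> set_pmf (map_pmf (pair_rows j) (canon_cb p A L n vs j))"
  hence "pmf (map_pmf (pair_rows j) (canon_cb p A L n vs j)) d \<noteq> 0" by (simp add: set_pmf_eq)
  thus "d \<in> pair_space j" using pmf_pair_rows[OF assms, of d] by (auto split: if_splits)
qed

definition same_levels :: "nat set" where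
  "same_levels = {l\<in>{1..k}. index_m l = index_m' l}"

lemma pair_weight_eq:
  "pair_weight k (x, y) = (\<Prod>i<n. \<Prod>l\<in>{1..k}. gen_prob p A l (x i))
     * (of_bool (\<forall>i<n. \<forall>l\<in>same_levels. y i l = x i l)
         * (\<Prod>i<n. \<Prod>l\<in>{1..k} - same_levels. gen_prob p A l (y i)))"
proof -
  have S: "same_levels \<subseteq> {1..k}" by (auto simp: same_levels_def)
  have row: "(\<Prod>l\<in>{1..k}. level_weight l (x, y) i) = (\<Prod>l\<in>{1..k}. gen_prob p A l (x i))
      * (of_bool (\<forall>l\<in>same_levels. y i l = x i l) * (\<Prod>l\<in>{1..k} - same_levels. gen_prob p A l (y i)))" for i
  proof -
    let ?F = "\<lambda>l. if l \<in> same_levels then of_bool (y i l = x i l) else gen_prob p A l (y i)"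
    have "(\<Prod>l\<in>{1..k}. ?F l) = (\<Prod>l\<in>{1..k} - same_levels. ?F l) * (\<Prod>l\<in>same_levels. ?F l)"
      using S by (intro prod.subset_diff) auto
    moreover have "(\<Prod>l\<in>same_levels. ?F l) = of_bool (\<forall>l\<in>same_levels. y i l = x i l)"
      using finite_subset[OF S] by (simp add: prod_of_bool)
    moreover have "(\<Prod>l\<in>{1..k} - same_levels. ?F l) = (\<Prod>l\<in>{1..k} - same_levels. gen_prob p A l (y i))"
      by (intro prod.cong) auto
    ultimately have split: "(\<Prod>l\<in>{1..k}. ?F l)
        = of_bool (\<forall>l\<in>same_levels. y i l = x i l) * (\<Prod>l\<in>{1..k} - same_levels. gen_prob p A l (y i))"
      by simp
    have "(\<Prod>l\<in>{1..k}. level_weight l (x, y) i) = (\<Prod>l\<in>{1..k}. gen_prob p A l (x i) * ?F l)"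
      by (intro prod.cong refl) (simp add: level_weight_def same_levels_def)
    thus ?thesis by (simp only: prod.distrib split)
  qed
  have "(\<Prod>i<n. of_bool (\<forall>l\<in>same_levels. y i l = x i l) :: real)
      = of_bool (\<forall>i<n. \<forall>l\<in>same_levels. y i l = x i l)"
    by (simp add: prod_of_bool lessThan_def)
  then show ?thesis
    unfolding pair_weight_def row prod.distrib by simp
qed

end

definition fibre :: "(nat \<Rightarrow> 'v) \<Rightarrow> nat \<Rightarrow> nat \<Rightarrow> (nat \<Rightarrow> 'v) set" where
  "fibre vs j i = {w \<in> PiE {0..j} (\<lambda>_. UNIV). w 0 = vs i}"

lemma finite_fibre: "finite (fibre (vs :: nat \<Rightarrow> 'v::finite) j i)"
proof -
  have "finite (PiE {0..j} (\<lambda>_. (UNIV :: 'v set)))" by (intro finite_PiE) auto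
  thus ?thesis unfolding fibre_def by simp
qed

lemma set_marg_UV_extensional:
  assumes "a \<in> set_pmf (marg_UV p {0..k})"
  shows "snd a \<in> PiE {0..k} (\<lambda>_. UNIV)"
  using assms by (auto simp: set_pmf_marg_UV)

lemma pmf_marg_UV_0:
  "pmf (marg_UV p {0}) (u, restrict (\<lambda>_. v0) {0}) = pmf (map_pmf (\<lambda>(u, v). (u, v 0)) p) (u, v0)"
proof -
  have "(\<lambda>(u, v). (u, restrict v {0})) -` {(u, restrict (\<lambda>_. v0) {0})} = (\<lambda>(u, v). (u, v 0)) -` {(u, v0)}"
    apply (auto simp: fun_eq_iff restrict_def)
    subgoal for b by (drule spec[of _ 0]) simp
    done
  thus ?thesis unfolding marg_UV_def pmf_map by (rule arg_cong)
qed

lemma proj_UV_empty: "proj_UV {} a = (fst a, restrict (\<lambda>_. snd a 0) {0})"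
  by (auto simp: proj_UV_def fun_eq_iff restrict_def)

lemma cond_rest_empty:
  "cond_rest p k {} a = pmf (marg_UV p {0..k}) a / pmf (map_pmf (\<lambda>(u, v). (u, v 0)) p) (fst a, snd a 0)"
  unfolding cond_rest_def proj_UV_empty pmf_marg_UV_0 ..

text \<open>A row x drawn with seq_weight has x i distributed as the true conditional law of the
  levels 1..k given (us i, vs i); Chebyshev's inequality on the symbol counts shows that it is
  jointly typical with high probability.\<close>

locale conditional_typicality =
  fixes p :: "('u::finite \<times> (nat \<Rightarrow> 'v::finite)) pmf" and k :: nat
    and us :: "nat \<Rightarrow> 'u" and vs :: "nat \<Rightarrow> 'v" and n :: nat and eps eps' :: real
  assumes typ0: "(\<lambda>i. (us i, vs i)) \<in> typical (map_pmf (\<lambda>(u, v). (u, v 0)) p) eps' n"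
    and eps: "0 < eps'" "eps' < eps"
    and npos: "n > 0"
begin

abbreviation "p_UV \<equiv> marg_UV p {0..k}"
abbreviation "p_UV0 \<equiv> map_pmf (\<lambda>(u, v). (u, v 0)) p"
abbreviation "supp_UV \<equiv> set_pmf p_UV"

definition cond_weight :: "nat \<Rightarrow> (nat \<Rightarrow> 'v) \<Rightarrow> real" where "cond_weight i s
    = cond_rest p k {} (us i, s)"

lemma finite_supp_UV: "finite supp_UV" by (rule finite_set_marg_UV) auto

lemma cond_rest_nonneg: "cond_rest p k J a \<ge> 0" unfolding cond_rest_def by simp

lemma cond_weight_nonneg: "cond_weight i s \<ge> 0" unfolding cond_weight_def by (rule cond_rest_nonneg)

lemma sum_fibre_pmf_UV:
  "(\<Sum>s\<in>fibre vs k i. pmf p_UV (u, s)) = pmf p_UV0 (u, vs i)"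
proof -
  have inj: "inj_on (\<lambda>s. (u, s)) (fibre vs k i)" by (auto simp: inj_on_def)
  have "(\<Sum>s\<in>fibre vs k i. pmf p_UV (u, s)) = (\<Sum>a\<in>(\<lambda>s. (u, s)) ` fibre vs k i. pmf p_UV a)"
    by (simp add: sum.reindex[OF inj])
  also have "\<dots> = measure p_UV ((\<lambda>s. (u, s)) ` fibre vs k i)"
    by (rule measure_measure_pmf_finite[symmetric]) (simp add: finite_fibre)
  also have "\<dots> = measure p_UV ((\<lambda>s. (u, s)) ` fibre vs k i \<inter> supp_UV)" by (simp add: measure_Int_set_pmf)
  also have "(\<lambda>s. (u, s)) ` fibre vs k i \<inter> supp_UV
      = proj_UV {} -` {(u, restrict (\<lambda>_. vs i) {0})} \<inter> supp_UV"
  proof (intro equalityI subsetI)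
    fix a assume "a \<in> (\<lambda>s. (u, s)) ` fibre vs k i \<inter> supp_UV"
    thus "a \<in> proj_UV {} -` {(u, restrict (\<lambda>_. vs i) {0})} \<inter> supp_UV"
      by (auto simp: fibre_def proj_UV_empty)
  next
    fix a assume a: "a \<in> proj_UV {} -` {(u, restrict (\<lambda>_. vs i) {0})} \<inter> supp_UV"
    hence "fst a = u" "snd a 0 = vs i" by (auto simp: proj_UV_empty fun_eq_iff restrict_def split: if_splits)
    moreover have "snd a \<in> PiE {0..k} (\<lambda>_. UNIV)" using a set_marg_UV_extensional[of a p k] by auto
    ultimately show "a \<in> (\<lambda>s. (u, s)) ` fibre vs k i \<inter> supp_UV"
      using a by (auto simp: fibre_def image_iff intro!: exI[of _ "snd a"] prod_eqI)
  qed
  also have "measure p_UV \<dots> = measure p_UV (proj_UV {} -` {(u, restrict (\<lambda>_. vs i) {0})})"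
    by (simp add: measure_Int_set_pmf)
  also have "\<dots> = pmf (map_pmf (proj_UV {}) p_UV) (u, restrict (\<lambda>_. vs i) {0})" by (simp add: pmf_map)
  also have "\<dots> = pmf (marg_UV p {0}) (u, restrict (\<lambda>_. vs i) {0})"
    using marg_UV_eq_map_proj_UV[of "{}" k p] by simp
  also have "\<dots> = pmf p_UV0 (u, vs i)" by (rule pmf_marg_UV_0)
  finally show ?thesis .
qed

lemma pmf_UV0_pos: "i < n \<Longrightarrow> pmf p_UV0 (us i, vs i) > 0"
  using typical_in_support[OF typ0] by (simp add: pmf_positive)

lemma sum_cond_weight: "i < n \<Longrightarrow> (\<Sum>s\<in>fibre vs k i. cond_weight i s) = 1"
proof -
  assume i: "i < n"
  have "(\<Sum>s\<in>fibre vs k i. cond_weight i s) = (\<Sum>s\<in>fibre vs k i. pmf p_UV (us i, s) / pmf p_UV0 (us i, vs i))"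
    unfolding cond_weight_def cond_rest_empty by (intro sum.cong refl) (auto simp: fibre_def)
  also have "\<dots> = 1" using pmf_UV0_pos[OF i] by (simp add: sum_divide_distrib[symmetric] sum_fibre_pmf_UV)
  finally show ?thesis .
qed

definition seq_space :: "'v rows set" where "seq_space = PiE {..<n} (fibre vs k)"
definition seq_weight :: "'v rows \<Rightarrow> real" where "seq_weight x = (\<Prod>i<n. cond_weight i (x i))"
definition typical_row :: "'v rows \<Rightarrow> bool" where
  "typical_row x \<longleftrightarrow> (\<lambda>i. (us i, x i)) \<in> typical p_UV eps n"
definition occurrences :: "('u, 'v) joint_symbol \<Rightarrow> 'v rows \<Rightarrow> real" where
  "occurrences a x = real (card {i. i < n \<and> (us i, x i) = a})"
definition occurs_at :: "('u, 'v) joint_symbol \<Rightarrow> nat \<Rightarrow> (nat \<Rightarrow> 'v) \<Rightarrow> real" where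
  "occurs_at a i s = (if (us i, s) = a then 1 else 0)"
definition mean_occurrences :: "('u, 'v) joint_symbol \<Rightarrow> real" where
  "mean_occurrences a = (\<Sum>i<n. \<Sum>s\<in>fibre vs k i. cond_weight i s * occurs_at a i s)"

lemma finite_seq_space: "finite seq_space" unfolding seq_space_def by (intro finite_PiE finite_fibre) auto

lemma occurrences_eq_sum: "occurrences a x = (\<Sum>i<n. occurs_at a i (x i))"
proof -
  have "(\<Sum>i<n. occurs_at a i (x i)) = (\<Sum>i\<in>{i\<in>{..<n}. (us i, x i) = a}. 1)"
    unfolding occurs_at_def by (simp add: sum.inter_filter[symmetric])
  also have "{i\<in>{..<n}. (us i, x i) = a} = {i. i < n \<and> (us i, x i) = a}" by auto
  finally show ?thesis by (simp add: occurrences_def)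
qed

lemma sum_seq_weight: "(\<Sum>x\<in>seq_space. seq_weight x) = 1"
proof -
  have "(\<Sum>x\<in>seq_space. seq_weight x) = (\<Prod>i<n. \<Sum>s\<in>fibre vs k i. cond_weight i s)"
    unfolding seq_space_def seq_weight_def by (rule prod_sum_PiE[symmetric]) (auto simp: finite_fibre)
  also have "\<dots> = 1" by (simp add: sum_cond_weight)
  finally show ?thesis .
qed

lemma seq_weight_nonneg: "seq_weight x \<ge> 0" unfolding seq_weight_def by (intro prod_nonneg) (simp add: cond_weight_nonneg)

lemma pmf_UV0_pos_of_supp:
  assumes "a \<in> supp_UV"
  shows "pmf p_UV0 (fst a, snd a 0) > 0"
proof -
  obtain x where x: "x \<in> set_pmf p" "a = (fst x, restrict (snd x) {0..k})"
    using assms by (auto simp: set_pmf_marg_UV)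
  hence "(fst a, snd a 0) \<in> set_pmf p_UV0" by (auto simp: image_iff case_prod_unfold intro!: bexI[of _ x])
  thus ?thesis by (simp add: pmf_positive)
qed

lemma mean_occurrences_eq:
  assumes a: "a \<in> supp_UV"
  shows "mean_occurrences a = real (card {i. i < n \<and> (us i, vs i) = (fst a, snd a 0)}) * cond_rest p k {} a"
proof -
  have inner: "(\<Sum>s\<in>fibre vs k i. cond_weight i s * occurs_at a i s)
      = (if (us i, vs i) = (fst a, snd a 0) then cond_rest p k {} a else 0)" for i
  proof -
    have "(\<Sum>s\<in>fibre vs k i. cond_weight i s * occurs_at a i s)
        = (\<Sum>s\<in>fibre vs k i. if s = snd a then (if us i = fst a then cond_weight i s else 0) else 0)"
      by (intro sum.cong refl) (auto simp: occurs_at_def)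
    also have "\<dots> = (if snd a \<in> fibre vs k i then (if us i = fst a then cond_weight i (snd a) else 0) else 0)"
      using finite_fibre[of vs k i] by (simp add: sum.delta sum.delta' if_distrib[symmetric])
    also have "\<dots> = (if (us i, vs i) = (fst a, snd a 0) then cond_rest p k {} a else 0)"
      using set_marg_UV_extensional[OF a] by (auto simp: fibre_def cond_weight_def)
    finally show ?thesis .
  qed
  have "mean_occurrences a = (\<Sum>i<n. if (us i, vs i) = (fst a, snd a 0) then cond_rest p k {} a else 0)"
    unfolding mean_occurrences_def inner ..
  also have "\<dots> = (\<Sum>i\<in>{i\<in>{..<n}. (us i, vs i) = (fst a, snd a 0)}. cond_rest p k {} a)"
    by (simp add: sum.inter_filter[symmetric])
  also have "{i\<in>{..<n}. (us i, vs i) = (fst a, snd a 0)} = {i. i < n \<and> (us i, vs i) = (fst a, snd a 0)}" by auto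
  finally show ?thesis by simp
qed

lemma mean_occurrences_close:
  assumes a: "a \<in> supp_UV"
  shows "\<bar>mean_occurrences a - real n * pmf p_UV a\<bar> \<le> real n * eps' * pmf p_UV a"
proof -
  define c where "c = real (card {i. i < n \<and> (us i, vs i) = (fst a, snd a 0)})"
  define q where "q = pmf p_UV0 (fst a, snd a 0)"
  have q: "q > 0" using pmf_UV0_pos_of_supp[OF a] by (simp add: q_def)
  have t: "\<bar>c / real n - q\<bar> \<le> eps' * q" using typ0 unfolding typical_def c_def q_def by auto
  have "\<bar>c - real n * q\<bar> = real n * \<bar>c / real n - q\<bar>"
    using npos by (simp add: field_simps abs_mult[symmetric])
  also have "\<dots> \<le> real n * (eps' * q)" using t by (intro mult_left_mono) auto
  finally have cq: "\<bar>c - real n * q\<bar> \<le> real n * (eps' * q)" .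
  have "mean_occurrences a = c * pmf p_UV a / q" using mean_occurrences_eq[OF a] by (simp add: c_def q_def cond_rest_empty)
  hence "mean_occurrences a - real n * pmf p_UV a = (c - real n * q) * (pmf p_UV a / q)" using q by (simp add: field_simps)
  hence "\<bar>mean_occurrences a - real n * pmf p_UV a\<bar> = \<bar>c - real n * q\<bar> * (pmf p_UV a / q)" using q
      by (simp add: abs_mult)
  also have "\<dots> \<le> real n * (eps' * q) * (pmf p_UV a / q)" using cq q by (intro mult_right_mono) auto
  also have "\<dots> = real n * eps' * pmf p_UV a" using q by simp
  finally show ?thesis .
qed

lemma variance_occurrences_le: "(\<Sum>x\<in>seq_space. seq_weight x * (occurrences a x - mean_occurrences a)^2) \<le> real n"
proof -
  have "(\<Sum>x\<in>seq_space. seq_weight x * (occurrences a x - mean_occurrences a)^2)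
      = (\<Sum>x\<in>PiE {..<n} (fibre vs k). (\<Prod>i\<in>{..<n}. cond_weight i (x i)) *
          ((\<Sum>i\<in>{..<n}. occurs_at a i (x i)) - (\<Sum>i\<in>{..<n}. \<Sum>s\<in>fibre vs k i. cond_weight i s
              * occurs_at a i s))^2)"
    by (simp add: seq_space_def seq_weight_def occurrences_eq_sum mean_occurrences_def)
  also have "\<dots> \<le> real (card {..<n})"
    by (rule variance_sum_le_card) (auto simp: finite_fibre sum_cond_weight cond_weight_nonneg occurs_at_def)
  finally show ?thesis by simp
qed

definition deviates :: "('u, 'v) joint_symbol \<Rightarrow> 'v rows \<Rightarrow> bool" where
  "deviates a x \<longleftrightarrow> \<bar>occurrences a x - real n * pmf p_UV a\<bar> > real n * eps * pmf p_UV a"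

lemma prob_deviates_le:
  assumes a: "a \<in> supp_UV"
  shows "(\<Sum>x\<in>{x\<in>seq_space. deviates a x}. seq_weight x) \<le> 1 / (real n * (eps - eps')^2 * (pmf p_UV a)^2)"
proof -
  define t where "t = real n * (eps - eps') * pmf p_UV a"
  have pa: "pmf p_UV a > 0" using a by (simp add: pmf_positive)
  have t: "t > 0" using npos eps pa by (simp add: t_def)
  have b1: "1 \<le> (occurrences a x - mean_occurrences a)^2 / t^2" if "deviates a x" for x
  proof -
    have "\<bar>occurrences a x - real n * pmf p_UV a\<bar> > real n * eps * pmf p_UV a" using that by (simp add: deviates_def)
    hence "\<bar>occurrences a x - mean_occurrences a\<bar> \<ge> t" using mean_occurrences_close[OF a]
        by (simp add: t_def algebra_simps)
    hence "t^2 \<le> (occurrences a x - mean_occurrences a)^2" using t by (metis abs_ge_zero abs_of_pos power2_abs power_mono)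
    thus ?thesis using t by simp
  qed
  have "(\<Sum>x\<in>{x\<in>seq_space. deviates a x}. seq_weight x)
      \<le> (\<Sum>x\<in>{x\<in>seq_space. deviates a x}. seq_weight x * ((occurrences a x - mean_occurrences a)^2 / t^2))"
  proof (intro sum_mono)
    fix x assume "x \<in> {x\<in>seq_space. deviates a x}"
    hence "1 \<le> (occurrences a x - mean_occurrences a)^2 / t^2" using b1 by auto
    thus "seq_weight x \<le> seq_weight x * ((occurrences a x - mean_occurrences a)^2 / t^2)"
        using seq_weight_nonneg[of x] mult_left_mono[of 1 "(occurrences a x - mean_occurrences a)^2 / t^2" "seq_weight x"] by simp
  qed
  also have "\<dots> \<le> (\<Sum>x\<in>seq_space. seq_weight x * ((occurrences a x - mean_occurrences a)^2 / t^2))"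
    using finite_seq_space seq_weight_nonneg by (intro sum_mono2) auto
  also have "\<dots> = (\<Sum>x\<in>seq_space. seq_weight x * (occurrences a x - mean_occurrences a)^2) / t^2"
    by (simp add: sum_divide_distrib)
  also have "\<dots> \<le> real n / t^2" using variance_occurrences_le t by (intro divide_right_mono) auto
  also have "\<dots> = 1 / (real n * (eps - eps')^2 * (pmf p_UV a)^2)"
  proof -
    have "t^2 = real n * (real n * (eps - eps')^2 * (pmf p_UV a)^2)" by (simp add: t_def power_mult_distrib power2_eq_square)
    moreover have "real n / (real n * X) = 1 / X" for X using npos by simp
    ultimately show ?thesis by simp
  qed
  finally show ?thesis .
qed

lemma supp_UV_of_seq_weight:
  assumes "x \<in> seq_space" "seq_weight x \<noteq> 0" "i < n"
  shows "(us i, x i) \<in> supp_UV"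
proof -
  have "cond_weight i (x i) \<noteq> 0" using assms unfolding seq_weight_def by auto
  hence "pmf p_UV (us i, x i) \<noteq> 0" unfolding cond_weight_def cond_rest_def by auto
  thus ?thesis by (simp add: set_pmf_iff)
qed

lemma typical_row_of_not_deviates:
  assumes "\<forall>i<n. (us i, x i) \<in> supp_UV" "\<forall>a\<in>supp_UV. \<not> deviates a x"
  shows "typical_row x"
  unfolding typical_row_def typical_def
proof (intro CollectI allI)
  fix a
  show "\<bar>real (card {i. i < n \<and> (us i, x i) = a}) / real n - pmf p_UV a\<bar> \<le> eps * pmf p_UV a"
  proof (cases "a \<in> supp_UV")
    case True
    hence "\<bar>occurrences a x - real n * pmf p_UV a\<bar> \<le> real n * eps * pmf p_UV a" using assms(2)
        by (auto simp: deviates_def)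
    hence occurs_at: "\<bar>occurrences a x - real n * pmf p_UV a\<bar> / real n \<le> eps * pmf p_UV a" using npos
      by (simp add: divide_le_eq algebra_simps)
    have "occurrences a x / real n - pmf p_UV a = (occurrences a x - real n * pmf p_UV a) / real n" using npos
      by (simp add: field_simps)
    hence "\<bar>occurrences a x / real n - pmf p_UV a\<bar> = \<bar>occurrences a x - real n * pmf p_UV a\<bar> / real n"
      by (simp add: abs_divide)
    thus ?thesis using occurs_at by (simp add: occurrences_def)
  next
    case False
    hence "{i. i < n \<and> (us i, x i) = a} = {}" using assms(1) by auto
    moreover have "pmf p_UV a = 0" using False by (simp add: set_pmf_iff)
    ultimately show ?thesis by (simp del: Collect_empty_eq)
  qed
qed

lemma prob_typical_row_ge:
  "(\<Sum>x\<in>{x\<in>seq_space. typical_row x}. seq_weight x) \<ge> 1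
      - (\<Sum>a\<in>supp_UV. 1 / (real n * (eps - eps')^2 * (pmf p_UV a)^2))"
proof -
  have ntyp: "(\<Sum>x\<in>{x\<in>seq_space. \<not> typical_row x}. seq_weight x)
      \<le> (\<Sum>a\<in>supp_UV. \<Sum>x\<in>{x\<in>seq_space. deviates a x}. seq_weight x)"
  proof -
    have "(\<Sum>x\<in>{x\<in>seq_space. \<not> typical_row x}. seq_weight x)
        \<le> (\<Sum>x\<in>{x\<in>seq_space. \<not> typical_row x}. \<Sum>a\<in>supp_UV. if deviates a x then seq_weight
            x else 0)"
    proof (intro sum_mono)
      fix x assume x: "x \<in> {x\<in>seq_space. \<not> typical_row x}"
      show "seq_weight x \<le> (\<Sum>a\<in>supp_UV. if deviates a x then seq_weight x else 0)"
      proof (cases "seq_weight x = 0")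
        case True thus ?thesis using seq_weight_nonneg by (simp add: sum_nonneg)
      next
        case False
        hence "\<forall>i<n. (us i, x i) \<in> supp_UV" using supp_UV_of_seq_weight x by auto
        then obtain a where a: "a \<in> supp_UV" "deviates a x" using typical_row_of_not_deviates x by blast
        have "seq_weight x = (if deviates a x then seq_weight x else 0)" using a by simp
        also have "\<dots> \<le> (\<Sum>a\<in>supp_UV. if deviates a x then seq_weight x else 0)"
          using a finite_supp_UV seq_weight_nonneg by (intro member_le_sum) auto
        finally show ?thesis .
      qed
    qed
    also have "\<dots> = (\<Sum>a\<in>supp_UV. \<Sum>x\<in>{x\<in>seq_space. \<not> typical_row x}. if deviates a x then
        seq_weight x else 0)"
      by (rule sum.swap)
    also have "\<dots> \<le> (\<Sum>a\<in>supp_UV. \<Sum>x\<in>seq_space. if deviates a x then seq_weight x else 0)"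
      using finite_seq_space seq_weight_nonneg by (intro sum_mono sum_mono2) auto
    also have "\<dots> = (\<Sum>a\<in>supp_UV. \<Sum>x\<in>{x\<in>seq_space. deviates a x}. seq_weight x)"
      using finite_seq_space by (simp add: sum.inter_filter)
    finally show ?thesis .
  qed
  have "(\<Sum>x\<in>{x\<in>seq_space. typical_row x}. seq_weight x)
      + (\<Sum>x\<in>{x\<in>seq_space. \<not> typical_row x}. seq_weight x)
      = (\<Sum>x\<in>seq_space. (if typical_row x then seq_weight x else 0) + (if \<not> typical_row x then seq_weight x else 0))"
    by (simp add: sum.inter_filter[OF finite_seq_space] sum.distrib)
  also have "\<dots> = (\<Sum>x\<in>seq_space. seq_weight x)" by (intro sum.cong) auto
  finally have split: "(\<Sum>x\<in>seq_space. seq_weight x)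
      = (\<Sum>x\<in>{x\<in>seq_space. typical_row x}. seq_weight x)
          + (\<Sum>x\<in>{x\<in>seq_space. \<not> typical_row x}. seq_weight x)" by simp
  have "(\<Sum>a\<in>supp_UV. \<Sum>x\<in>{x\<in>seq_space. deviates a x}. seq_weight x)
      \<le> (\<Sum>a\<in>supp_UV. 1 / (real n * (eps - eps')^2 * (pmf p_UV a)^2))"
    by (intro sum_mono prob_deviates_le)
  thus ?thesis using split sum_seq_weight ntyp by linarith
qed

end

lemma num_msgs_ge:
  assumes "r \<ge> 0"
  shows "real (num_msgs r n) \<ge> 2 powr (real n * r) / 2" "num_msgs r n \<ge> 1"
proof -
  have x1: "2 powr (real n * r) \<ge> 1" using assms by (intro ge_one_powr_ge_zero) auto
  have "real (num_msgs r n) = of_int \<lfloor>2 powr (real n * r)\<rfloor>"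
    unfolding num_msgs_def using x1 by simp
  moreover have "of_int \<lfloor>2 powr (real n * r)\<rfloor> \<ge> 2 powr (real n * r) - 1" by linarith
  moreover have f1: "\<lfloor>2 powr (real n * r)\<rfloor> \<ge> 1" using x1 by (simp add: le_floor_iff)
  moreover have "real_of_int \<lfloor>2 powr (real n * r)\<rfloor> \<ge> 1" using f1 by simp
  ultimately show "real (num_msgs r n) \<ge> 2 powr (real n * r) / 2" using x1 by linarith
  show "num_msgs r n \<ge> 1" using f1 unfolding num_msgs_def by linarith
qed

lemma card_msgs: "card (msgs L k) = (\<Prod>j\<in>{1..k}. L j)"
  unfolding msgs_def by (simp add: card_PiE)

lemma finite_msgs: "finite (msgs L k)"
  unfolding msgs_def by (intro finite_PiE) auto

lemma count_agree:
  assumes m: "m \<in> msgs L k" and J: "J \<subseteq> {1..k}"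
  shows "card {m'\<in>msgs L k. \<forall>j\<in>J. m' j = m j} = (\<Prod>j\<in>{1..k}-J. L j)"
proof -
  have "{m'\<in>msgs L k. \<forall>j\<in>J. m' j = m j} = PiE {1..k} (\<lambda>j. if j \<in> J then {m j} else {1..L j})"
    using m J by (auto 0 4 simp: msgs_def PiE_iff extensional_def split: if_splits)
  hence "card {m'\<in>msgs L k. \<forall>j\<in>J. m' j = m j}
      = (\<Prod>j\<in>{1..k}. card (if j \<in> J then {m j} else {1..L j}))"
    by (simp add: card_PiE)
  also have "\<dots> = (\<Prod>j\<in>{1..k}-J. card (if j \<in> J then {m j} else {1..L j}))
      * (\<Prod>j\<in>J. card (if j \<in> J then {m j} else {1..L j}))"
    using J by (intro prod.subset_diff) auto
  also have "\<dots> = (\<Prod>j\<in>{1..k}-J. L j)"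
    by (simp add: prod.neutral)
  finally show ?thesis .
qed

lemma count_agree_sum:
  assumes J: "J \<subseteq> {1..k}"
  shows "(\<Sum>m\<in>msgs L k. \<Sum>m'\<in>msgs L k. if \<forall>j\<in>J. m j = m' j then (1::real) else 0)
     = real (card (msgs L k)) * (\<Prod>j\<in>{1..k}-J. real (L j))"
proof -
  have "(\<Sum>m'\<in>msgs L k. if \<forall>j\<in>J. m j = m' j then (1::real) else 0) = (\<Prod>j\<in>{1..k}-J. real (L j))"
    if m: "m \<in> msgs L k" for m
  proof -
    have "(\<Sum>m'\<in>msgs L k. if \<forall>j\<in>J. m j = m' j then (1::real) else 0)
        = real (card {m'\<in>msgs L k. \<forall>j\<in>J. m' j = m j})"
      using finite_msgs by (simp add: sum.inter_filter[symmetric] eq_commute)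
    also have "\<dots> = (\<Prod>j\<in>{1..k}-J. real (L j))" using count_agree[OF m J] by simp
    finally show ?thesis .
  qed
  thus ?thesis by simp
qed

text \<open>gen_weight x is the probability that the codewords of a fixed message tuple have rows x.\<close>

locale covering_setup = conditional_typicality p k us vs n eps eps'
  for p :: "('u::finite \<times> (nat \<Rightarrow> 'v::finite)) pmf" and k us vs n eps eps' +
  fixes A :: "nat \<Rightarrow> nat set" and L :: "nat \<Rightarrow> nat"
  assumes A_sub: "\<forall>j\<in>{1..k}. A j \<subseteq> {1..<j}"
    and A_cl: "\<forall>j\<in>{1..k}. \<forall>i\<in>A j. A i \<subseteq> A j"
begin

definition gen_weight :: "'v rows \<Rightarrow> real" where
  "gen_weight x = (\<Prod>i<n. \<Prod>l\<in>{1..k}. gen_prob p A l (x i))"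
definition gen_weight_outside :: "nat set \<Rightarrow> 'v rows \<Rightarrow> real" where
  "gen_weight_outside J y = (\<Prod>i<n. \<Prod>l\<in>{1..k}-J. gen_prob p A l (y i))"
definition agree_on :: "nat set \<Rightarrow> 'v rows \<Rightarrow> 'v rows \<Rightarrow> bool" where
  "agree_on J x y \<longleftrightarrow> (\<forall>i<n. \<forall>l\<in>J. y i l = x i l)"
definition agree_levels :: "(nat \<Rightarrow> nat) \<Rightarrow> (nat \<Rightarrow> nat) \<Rightarrow> nat set" where
  "agree_levels m m' = {l\<in>{1..k}. restrict m (insert l (A l)) = restrict m' (insert l (A l))}"
definition covers :: "(nat \<Rightarrow> nat) \<Rightarrow> 'v codebook \<Rightarrow> bool" where
  "covers m c \<longleftrightarrow> joint_seq A k us vs c m \<in> typical p_UV eps n"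

lemma prob_covers_pair_eq:
  assumes mm: "m \<in> msgs L k" "m' \<in> msgs L k"
  shows "measure (canon_cb p A L n vs k) {c. covers m c \<and> covers m' c}
     = (\<Sum>x\<in>{x\<in>seq_space. typical_row x}. \<Sum>y\<in>{y\<in>seq_space. typical_row y}. gen_weight x
         * (if agree_on (agree_levels m m') x y then gen_weight_outside (agree_levels m m') y else 0))"
proof -
  interpret cb: codeword_pair p A k L n vs m m'
    using A_sub A_cl mm by unfold_locales auto
  let ?M = "canon_cb p A L n vs k"
  let ?J = "agree_levels m m'"
  have row_space_eq_fibre: "cb.row_space j i = fibre vs j i" for j i by (simp add: cb.row_space_def fibre_def)
  have pair_space_eq: "cb.pair_space k = seq_space \<times> seq_space"
      by (simp add: cb.pair_space_def seq_space_def row_space_eq_fibre[abs_def])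
  have X1: "covers m c \<longleftrightarrow> typical_row (fst (cb.pair_rows k c))" for c
    unfolding covers_def typical_row_def
    by (rule typical_cong) (simp add: joint_seq_def cb.pair_rows_def cb.row_def)
  have X2: "covers m' c \<longleftrightarrow> typical_row (snd (cb.pair_rows k c))" for c
    unfolding covers_def typical_row_def
    by (rule typical_cong) (simp add: joint_seq_def cb.pair_rows_def cb.row_def)
  have same: "cb.same_levels = ?J"
    by (simp add: cb.same_levels_def agree_levels_def cb.index_m_def cb.index_m'_def)
  have pair_weight_eq: "cb.pair_weight k (x, y) = gen_weight x * (if agree_on ?J x y then gen_weight_outside ?J y else 0)" for x y
    unfolding cb.pair_weight_eq same by (simp add: gen_weight_def gen_weight_outside_def agree_on_def)
  have "measure ?M {c. covers m c \<and> covers m' c} = measure ?M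
      (cb.pair_rows k -` {d. typical_row (fst d) \<and> typical_row (snd d)})"
    by (simp add: X1 X2 vimage_def)
  also have "\<dots> = measure (map_pmf (cb.pair_rows k) ?M) {d. typical_row (fst d) \<and> typical_row (snd d)}"
    by (simp add: measure_map_pmf)
  also have "\<dots> = (\<Sum>d\<in>{d. typical_row (fst d) \<and> typical_row (snd d)} \<inter> cb.pair_space k. pmf
      (map_pmf (cb.pair_rows k) ?M) d)"
    by (rule measure_pmf_eq_sum_on_support[OF cb.finite_pair_space cb.set_pmf_pair_rows]) simp
  also have "\<dots> = (\<Sum>d\<in>{x\<in>seq_space. typical_row x}
      \<times> {y\<in>seq_space. typical_row y}. cb.pair_weight k d)"
  proof -
    have seteq: "{d. typical_row (fst d) \<and> typical_row (snd d)} \<inter> cb.pair_space k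
        = {x\<in>seq_space. typical_row x} \<times> {y\<in>seq_space. typical_row y}"
      unfolding pair_space_eq by auto
    show ?thesis unfolding seteq
    proof (rule sum.cong[OF refl])
      fix d assume "d \<in> {x\<in>seq_space. typical_row x} \<times> {y\<in>seq_space. typical_row y}"
      hence "d \<in> cb.pair_space k" unfolding pair_space_eq by auto
      thus "pmf (map_pmf (cb.pair_rows k) ?M) d = cb.pair_weight k d" using cb.pmf_pair_rows[of k d] by simp
    qed
  qed
  also have "\<dots> = (\<Sum>x\<in>{x\<in>seq_space. typical_row x}. \<Sum>y\<in>{y\<in>seq_space. typical_row y}.
      cb.pair_weight k (x, y))"
    by (simp add: sum.cartesian_product)
  finally show ?thesis by (simp add: pair_weight_eq)
qed

definition prob_covers :: real where "prob_covers = (\<Sum>x\<in>{x\<in>seq_space. typical_row x}. gen_weight x)"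

lemma A_subset: "l \<in> {1..k} \<Longrightarrow> A l \<subseteq> {1..k}" using A_sub by fastforce

lemma prod_gen_prob_eq_powr:
  assumes a: "a \<in> supp_UV" and J: "J \<subseteq> {1..k}"
  shows "(\<Prod>l\<in>{1..k}-J. gen_prob p A l (snd a)) = 2 powr (log_ratio p A k J a) * cond_rest p k J a"
proof -
  have lp: "gen_prob p A l (snd a) > 0" if "l \<in> {1..k}-J" for l
    using gen_prob_pos[of a p k l A] a that A_subset[of l] by auto
  have rp: "cond_rest p k J a > 0" by (rule cond_rest_pos[OF J a])
  have "2 powr (log_ratio p A k J a) = 2 powr (\<Sum>l\<in>{1..k}-J. log 2 (gen_prob p A l (snd a))) / 2 powr
      (log 2 (cond_rest p k J a))"
    unfolding log_ratio_def by (rule powr_diff)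
  also have "2 powr (\<Sum>l\<in>{1..k}-J. log 2 (gen_prob p A l (snd a)))
      = (\<Prod>l\<in>{1..k}-J. 2 powr (log 2 (gen_prob p A l (snd a))))"
    by (rule powr_sum) simp
  also have "\<dots> = (\<Prod>l\<in>{1..k}-J. gen_prob p A l (snd a))"
    using lp by (intro prod.cong refl) simp
  also have "2 powr (log 2 (cond_rest p k J a)) = cond_rest p k J a" using rp by simp
  finally show ?thesis using rp by simp
qed

lemma supp_UV_of_typical_row: "typical_row x \<Longrightarrow> i < n \<Longrightarrow> (us i, x i) \<in> supp_UV"
  unfolding typical_row_def using typical_in_support by fastforce

lemma gen_weight_outside_powr:
  assumes "typical_row y" "J \<subseteq> {1..k}"
  shows "gen_weight_outside J y = 2 powr (\<Sum>i<n. log_ratio p A k J (us i, y i)) * (\<Prod>i<n. cond_rest p k J (us i, y i))"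
proof -
  have "gen_weight_outside J y = (\<Prod>i<n. 2 powr (log_ratio p A k J (us i, y i)) * cond_rest p k J (us i, y i))"
    unfolding gen_weight_outside_def using prod_gen_prob_eq_powr[OF supp_UV_of_typical_row[OF assms(1)] assms(2)]
        by (intro prod.cong refl) auto
  also have "\<dots> = 2 powr (\<Sum>i<n. log_ratio p A k J (us i, y i)) * (\<Prod>i<n. cond_rest p k J (us i, y i))"
    by (simp add: prod.distrib powr_sum)
  finally show ?thesis .
qed

lemma sum_log_ratio_bounds:
  assumes "typical_row y"
  shows "(\<Sum>i<n. log_ratio p A k J (us i, y i)) \<le> real n * (mean_log_ratio p A k J + eps * mean_abs_log_ratio p A k J)"
    and "(\<Sum>i<n. log_ratio p A k J (us i, y i)) \<ge> real n * (mean_log_ratio p A k J - eps * mean_abs_log_ratio p A k J)"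
proof -
  have "\<bar>(\<Sum>i<n. log_ratio p A k J ((\<lambda>i. (us i, y i)) i)) - real n
      * (\<Sum>a\<in>supp_UV. pmf p_UV a * log_ratio p A k J a)\<bar>
        \<le> real n * eps * (\<Sum>a\<in>supp_UV. pmf p_UV a * \<bar>log_ratio p A k J a\<bar>)"
    using assms by (intro typical_sum_deviation[OF finite_supp_UV _ npos]) (simp add: typical_row_def)
  hence "\<bar>(\<Sum>i<n. log_ratio p A k J (us i, y i)) - real n * mean_log_ratio p A k J\<bar> \<le> real n * eps
      * mean_abs_log_ratio p A k J"
    by (simp add: mean_log_ratio_def mean_abs_log_ratio_def)
  thus "(\<Sum>i<n. log_ratio p A k J (us i, y i)) \<le> real n * (mean_log_ratio p A k J + eps * mean_abs_log_ratio p A k J)"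
    and "(\<Sum>i<n. log_ratio p A k J (us i, y i)) \<ge> real n * (mean_log_ratio p A k J - eps * mean_abs_log_ratio p A k J)"
    by (simp_all add: algebra_simps abs_le_iff)
qed

lemma sum_fibre_cond_rest_le_1:
  assumes i: "i < n" and xi: "xi \<in> fibre vs k i" and J: "J \<subseteq> {1..k}"
  shows "(\<Sum>s\<in>{s\<in>fibre vs k i. \<forall>l\<in>J. s l = xi l}. cond_rest p k J (us i, s)) \<le> 1"
proof -
  let ?B = "{s\<in>fibre vs k i. \<forall>l\<in>J. s l = xi l}"
  let ?b = "proj_UV J (us i, xi)"
  let ?pJ = "marg_UV p (insert 0 J)"
  have finB: "finite ?B" using finite_fibre[of vs k i] by simp
  have pr: "proj_UV J (us i, s) = ?b" if "s \<in> ?B" for s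
    using that xi by (auto simp: proj_UV_def fibre_def fun_eq_iff restrict_def)
  have "(\<Sum>s\<in>?B. cond_rest p k J (us i, s)) = (\<Sum>s\<in>?B. pmf p_UV (us i, s)) / pmf ?pJ ?b"
    unfolding cond_rest_def sum_divide_distrib using pr by (intro sum.cong refl) simp
  also have "(\<Sum>s\<in>?B. pmf p_UV (us i, s)) \<le> pmf ?pJ ?b"
  proof -
    have inj: "inj_on (\<lambda>s. (us i, s)) ?B" by (auto simp: inj_on_def)
    have "(\<Sum>s\<in>?B. pmf p_UV (us i, s)) = (\<Sum>a\<in>(\<lambda>s. (us i, s)) ` ?B. pmf p_UV a)"
      by (simp add: sum.reindex[OF inj])
    also have "\<dots> = measure p_UV ((\<lambda>s. (us i, s)) ` ?B)"
      by (rule measure_measure_pmf_finite[symmetric]) (use finB in simp)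
    also have "\<dots> \<le> measure p_UV (proj_UV J -` {?b})"
      using pr by (intro measure_pmf.finite_measure_mono) auto
    also have "\<dots> = pmf ?pJ ?b" using marg_UV_eq_map_proj_UV[OF J, of p] by (simp add: pmf_map)
    finally show ?thesis .
  qed
  hence "(\<Sum>s\<in>?B. pmf p_UV (us i, s)) / pmf ?pJ ?b \<le> 1"
    by (cases "pmf ?pJ ?b = 0") (simp_all add: divide_le_eq_1)
  finally show ?thesis .
qed

lemma agree_on_eq_PiE:
  "{y\<in>seq_space. agree_on J x y} = PiE {..<n} (\<lambda>i. {s\<in>fibre vs k i. \<forall>l\<in>J. s l = x i l})"
  by (auto simp: seq_space_def agree_on_def PiE_iff extensional_def)

lemma sum_agreeing_le:
  assumes x: "x \<in> seq_space" "typical_row x" and J: "J \<subseteq> {1..k}"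
  shows "(\<Sum>y\<in>{y\<in>seq_space. typical_row y}. if agree_on J x y then gen_weight_outside J y else 0)
      \<le> 2 powr (real n * (mean_log_ratio p A k J + eps * mean_abs_log_ratio p A k J))"
proof -
  let ?E = "2 powr (real n * (mean_log_ratio p A k J + eps * mean_abs_log_ratio p A k J))"
  let ?R = "\<lambda>y. \<Prod>i<n. cond_rest p k J (us i, y i)"
  have Rnn: "?R y \<ge> 0" for y by (intro prod_nonneg) (simp add: cond_rest_nonneg)
  have "(\<Sum>y\<in>{y\<in>seq_space. typical_row y}. if agree_on J x y then gen_weight_outside J y else 0)
      \<le> (\<Sum>y\<in>{y\<in>seq_space. typical_row y}. if agree_on J x y then ?E * ?R y else 0)"
  proof (intro sum_mono)
    fix y assume y: "y \<in> {y\<in>seq_space. typical_row y}"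
    have ty: "typical_row y" using y by simp
    have "gen_weight_outside J y \<le> ?E * ?R y"
      unfolding gen_weight_outside_powr[OF ty J] using sum_log_ratio_bounds(1)[OF ty, of J] Rnn[of y]
      by (intro mult_right_mono) auto
    thus "(if agree_on J x y then gen_weight_outside J y else 0) \<le> (if agree_on J x y then ?E * ?R y else 0)" by simp
  qed
  also have "\<dots> \<le> (\<Sum>y\<in>seq_space. if agree_on J x y then ?E * ?R y else 0)"
    using finite_seq_space Rnn by (intro sum_mono2) auto
  also have "\<dots> = ?E * (\<Sum>y\<in>{y\<in>seq_space. agree_on J x y}. ?R y)"
    by (simp add: sum.inter_filter[OF finite_seq_space] sum_distrib_left if_distrib cong: if_cong)
  also have "(\<Sum>y\<in>{y\<in>seq_space. agree_on J x y}. ?R y)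
      = (\<Prod>i<n. \<Sum>s\<in>{s\<in>fibre vs k i. \<forall>l\<in>J. s l = x i l}. cond_rest p k J (us i, s))"
    unfolding agree_on_eq_PiE by (rule prod_sum_PiE[symmetric]) (auto simp: finite_fibre)
  also have "\<dots> \<le> (\<Prod>i<n. (1::real))"
  proof (intro prod_mono conjI)
    fix i assume i: "i \<in> {..<n}"
    have "x i \<in> fibre vs k i" using x i by (auto simp: seq_space_def)
    thus "(\<Sum>s\<in>{s\<in>fibre vs k i. \<forall>l\<in>J. s l = x i l}. cond_rest p k J (us i, s)) \<le> 1"
      using sum_fibre_cond_rest_le_1 i J by auto
    show "0 \<le> (\<Sum>s\<in>{s\<in>fibre vs k i. \<forall>l\<in>J. s l = x i l}. cond_rest p k J (us i, s))"
      by (intro sum_nonneg) (simp add: cond_rest_nonneg)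
  qed
  finally show ?thesis by simp
qed

lemma prob_covers_ge: "prob_covers \<ge> 2 powr (real n * (mean_log_ratio p A k {} - eps * mean_abs_log_ratio p A k {}))
    * (\<Sum>x\<in>{x\<in>seq_space. typical_row x}. seq_weight x)"
proof -
  have "2 powr (real n * (mean_log_ratio p A k {} - eps * mean_abs_log_ratio p A k {}))
      * (\<Sum>x\<in>{x\<in>seq_space. typical_row x}. seq_weight x)
      = (\<Sum>x\<in>{x\<in>seq_space. typical_row x}. 2 powr
          (real n * (mean_log_ratio p A k {} - eps * mean_abs_log_ratio p A k {})) * seq_weight x)"
    by (simp add: sum_distrib_left)
  also have "\<dots> \<le> (\<Sum>x\<in>{x\<in>seq_space. typical_row x}. gen_weight x)"
  proof (intro sum_mono)
    fix x assume x: "x \<in> {x\<in>seq_space. typical_row x}"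
    have "gen_weight x = gen_weight_outside {} x" by (simp add: gen_weight_def gen_weight_outside_def)
    also have "\<dots> = 2 powr (\<Sum>i<n. log_ratio p A k {} (us i, x i)) * seq_weight x"
      using x by (simp add: gen_weight_outside_powr seq_weight_def cond_weight_def)
    finally have qx: "gen_weight x = 2 powr (\<Sum>i<n. log_ratio p A k {} (us i, x i)) * seq_weight x" .
    show "2 powr (real n * (mean_log_ratio p A k {} - eps * mean_abs_log_ratio p A k {})) * seq_weight x \<le> gen_weight x"
      unfolding qx using sum_log_ratio_bounds(2)[of x "{}"] x seq_weight_nonneg[of x]
      by (intro mult_right_mono) auto
  qed
  finally show ?thesis by (simp add: prob_covers_def)
qed

lemma pair_sum_disjoint:
  "(\<Sum>x\<in>{x\<in>seq_space. typical_row x}. \<Sum>y\<in>{y\<in>seq_space. typical_row y}. gen_weight x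
      * (if agree_on {} x y then gen_weight_outside {} y else 0)) = prob_covers^2"
proof -
  have "gen_weight_outside {} y = gen_weight y" for y by (simp add: gen_weight_outside_def gen_weight_def)
  hence "(\<Sum>x\<in>{x\<in>seq_space. typical_row x}. \<Sum>y\<in>{y\<in>seq_space. typical_row y}. gen_weight x
      * (if agree_on {} x y then gen_weight_outside {} y else 0))
     = (\<Sum>x\<in>{x\<in>seq_space. typical_row x}. \<Sum>y\<in>{y\<in>seq_space. typical_row y}. gen_weight x * gen_weight y)"
    by (simp add: agree_on_def)
  also have "\<dots> = prob_covers^2" by (simp add: prob_covers_def power2_eq_square sum_product)
  finally show ?thesis .
qed

lemma agree_on_all_iff:
  assumes "x \<in> seq_space" "y \<in> seq_space"
  shows "agree_on {1..k} x y \<longleftrightarrow> y = x"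
proof
  assume agree: "agree_on {1..k} x y"
  have "y i l = x i l" for i l
  proof (cases "i < n")
    case True
    hence "x i \<in> fibre vs k i" "y i \<in> fibre vs k i" using assms by (auto simp: seq_space_def)
    thus ?thesis using agree True
      by (cases "l = 0"; cases "l \<le> k") (auto simp: fibre_def PiE_iff extensional_def agree_on_def)
  next
    case False thus ?thesis using assms by (auto simp: seq_space_def PiE_iff extensional_def)
  qed
  thus "y = x" by (simp add: fun_eq_iff)
qed (simp add: agree_on_def)

lemma pair_sum_identical:
  "(\<Sum>x\<in>{x\<in>seq_space. typical_row x}. \<Sum>y\<in>{y\<in>seq_space. typical_row y}.
      gen_weight x * (if agree_on {1..k} x y then gen_weight_outside {1..k} y else 0)) = prob_covers"
proof -
  have "(\<Sum>y\<in>{y\<in>seq_space. typical_row y}. gen_weight x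
      * (if agree_on {1..k} x y then gen_weight_outside {1..k} y else 0))
      = gen_weight x" if x: "x \<in> {x\<in>seq_space. typical_row x}" for x
  proof -
    have "(\<Sum>y\<in>{y\<in>seq_space. typical_row y}. gen_weight x
        * (if agree_on {1..k} x y then gen_weight_outside {1..k} y else 0))
        = (\<Sum>y\<in>{y\<in>seq_space. typical_row y}. if y = x then gen_weight x else 0)"
      using x agree_on_all_iff by (intro sum.cong refl) (auto simp: gen_weight_outside_def)
    also have "\<dots> = gen_weight x" using x finite_seq_space by (simp add: sum.delta')
    finally show ?thesis .
  qed
  thus ?thesis by (simp add: prob_covers_def)
qed

lemma agree_levels_subset: "agree_levels m m' \<subseteq> {1..k}" by (auto simp: agree_levels_def)

lemma agree_levels_eq: "l \<in> agree_levels m m' \<Longrightarrow> m l = m' l"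
  unfolding agree_levels_def by (auto simp: fun_eq_iff restrict_def) (metis insertI1)

lemma agree_levels_closed: "l \<in> agree_levels m m' \<Longrightarrow> A l \<subseteq> agree_levels m m'"
proof
  fix a assume l: "l \<in> agree_levels m m'" and a: "a \<in> A l"
  have lk: "l \<in> {1..k}" using l by (auto simp: agree_levels_def)
  have ak: "a \<in> {1..k}" using a A_subset[OF lk] by auto
  have "A a \<subseteq> A l" using A_cl lk a by blast
  hence sub: "insert a (A a) \<subseteq> insert l (A l)" using a by auto
  have "restrict m (insert l (A l)) = restrict m' (insert l (A l))" using l by (simp add: agree_levels_def)
  hence eq: "m x = m' x" if "x \<in> insert l (A l)" for x
  proof -
    have "restrict m (insert l (A l)) x = restrict m' (insert l (A l)) x"
      using \<open>restrict m (insert l (A l)) = restrict m' (insert l (A l))\<close> by (rule fun_cong)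
    thus ?thesis using that by (simp add: restrict_def split: if_splits)
  qed
  have "restrict m (insert a (A a)) = restrict m' (insert a (A a))"
  proof
    fix x show "restrict m (insert a (A a)) x = restrict m' (insert a (A a)) x"
      using eq sub by (cases "x \<in> insert a (A a)") auto
  qed
  thus "a \<in> agree_levels m m'" using ak by (simp add: agree_levels_def)
qed

lemma agree_levels_self: "agree_levels m m = {1..k}" by (auto simp: agree_levels_def)

definition overlap_bound :: "nat set \<Rightarrow> real" where "overlap_bound J
    = 2 powr (real n * (mean_log_ratio p A k J + eps * mean_abs_log_ratio p A k J))"

lemma gen_weight_nonneg: "gen_weight x \<ge> 0" unfolding gen_weight_def gen_prob_def by (intro prod_nonneg) auto

lemma prob_covers_nonneg: "prob_covers \<ge> 0" unfolding prob_covers_def by (intro sum_nonneg gen_weight_nonneg)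

lemma prob_covers_pair_le:
  assumes mm: "m \<in> msgs L k" "m' \<in> msgs L k"
  shows "measure (canon_cb p A L n vs k) {c. covers m c \<and> covers m' c}
     \<le> prob_covers^2 + (\<Sum>J\<in>ancestral_sets A k. if (\<forall>j\<in>J. m j = m' j) then prob_covers
         * overlap_bound J else 0)"
proof -
  let ?J = "agree_levels m m'"
  let ?S = "(\<Sum>x\<in>{x\<in>seq_space. typical_row x}. \<Sum>y\<in>{y\<in>seq_space. typical_row y}. gen_weight x
      * (if agree_on ?J x y then gen_weight_outside ?J y else 0))"
  have P: "measure (canon_cb p A L n vs k) {c. covers m c \<and> covers m' c} = ?S" by (rule prob_covers_pair_eq[OF mm])
  have nn: "0 \<le> (\<Sum>J\<in>ancestral_sets A k. if (\<forall>j\<in>J. m j = m' j) then prob_covers * overlap_bound J else 0)"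
    using prob_covers_nonneg by (intro sum_nonneg) (auto simp: overlap_bound_def)
  show ?thesis
  proof (cases "?J = {}")
    case True
    have "?S = prob_covers^2" unfolding True by (rule pair_sum_disjoint)
    thus ?thesis using P nn by simp
  next
    case False
    have J0: "?J \<in> ancestral_sets A k" using False agree_levels_subset agree_levels_closed by (auto simp: ancestral_sets_def)
    have ag: "\<forall>j\<in>?J. m j = m' j" using agree_levels_eq by blast
    have "?S \<le> (\<Sum>x\<in>{x\<in>seq_space. typical_row x}. gen_weight x * overlap_bound ?J)"
    proof (intro sum_mono)
      fix x assume x: "x \<in> {x\<in>seq_space. typical_row x}"
      have "(\<Sum>y\<in>{y\<in>seq_space. typical_row y}. gen_weight x
          * (if agree_on ?J x y then gen_weight_outside ?J y else 0))
          = gen_weight x * (\<Sum>y\<in>{y\<in>seq_space. typical_row y}. if agree_on ?J x y then gen_weight_outside ?J y else 0)"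
        by (simp add: sum_distrib_left)
      also have "\<dots> \<le> gen_weight x * overlap_bound ?J"
        using sum_agreeing_le[of x ?J] x agree_levels_subset gen_weight_nonneg[of x] unfolding overlap_bound_def
        by (intro mult_left_mono) auto
      finally show "(\<Sum>y\<in>{y\<in>seq_space. typical_row y}. gen_weight x
          * (if agree_on ?J x y then gen_weight_outside ?J y else 0)) \<le> gen_weight x * overlap_bound ?J" .
    qed
    also have "\<dots> = prob_covers * overlap_bound ?J" by (simp add: prob_covers_def sum_distrib_right)
    also have "\<dots> = (if (\<forall>j\<in>?J. m j = m' j) then prob_covers * overlap_bound ?J else 0)" using ag by simp
    also have "\<dots> \<le> (\<Sum>J\<in>ancestral_sets A k. if (\<forall>j\<in>J. m j = m' j) then prob_covers
        * overlap_bound J else 0)"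
      using J0 finite_ancestral_sets prob_covers_nonneg
      by (intro member_le_sum[where f="\<lambda>J. if (\<forall>j\<in>J. m j = m' j) then prob_covers
          * overlap_bound J else 0"]) (auto simp: overlap_bound_def)
    finally show ?thesis using P prob_covers_nonneg by (simp add: power2_eq_square) (smt (verit) mult_nonneg_nonneg)
  qed
qed

lemma sum_prob_covers_pairs_le:
  "(\<Sum>m\<in>msgs L k. \<Sum>m'\<in>msgs L k. measure (canon_cb p A L n vs k) {c. covers m c \<and> covers m' c})
    \<le> real (card (msgs L k))^2 * prob_covers^2
       + (\<Sum>J\<in>ancestral_sets A k. prob_covers * overlap_bound J
           * (real (card (msgs L k)) * (\<Prod>j\<in>{1..k}-J. real (L j))))"
proof -
  let ?Ms = "msgs L k"
  have "(\<Sum>m\<in>?Ms. \<Sum>m'\<in>?Ms. measure (canon_cb p A L n vs k) {c. covers m c \<and> covers m' c})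
      \<le> (\<Sum>m\<in>?Ms. \<Sum>m'\<in>?Ms. prob_covers^2
          + (\<Sum>J\<in>ancestral_sets A k. prob_covers * overlap_bound J * (if (\<forall>j\<in>J. m j = m' j) then 1 else 0)))"
    using prob_covers_pair_le by (intro sum_mono) (simp add: if_distrib cong: if_cong)
  also have "\<dots> = real (card ?Ms)^2 * prob_covers^2
      + (\<Sum>J\<in>ancestral_sets A k. prob_covers * overlap_bound J
          * (\<Sum>m\<in>?Ms. \<Sum>m'\<in>?Ms. if (\<forall>j\<in>J. m j = m' j) then 1 else 0))"
    by (simp add: sum.distrib sum_distrib_left sum.swap[of _ "ancestral_sets A k"] power2_eq_square)
  also have "\<dots> = real (card ?Ms)^2 * prob_covers^2
      + (\<Sum>J\<in>ancestral_sets A k. prob_covers * overlap_bound J * (real (card ?Ms) * (\<Prod>j\<in>{1..k}-J. real (L j))))"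
    by (intro arg_cong2[where f="(+)"] refl sum.cong) (auto simp: ancestral_sets_def count_agree_sum)
  finally show ?thesis .
qed

lemma covers_iff_codewords:
  "covers m c \<longleftrightarrow> (\<lambda>i. (us i, restrict
      (\<lambda>j. if j = 0 then vs i else codewords A k n c m j i) {0..k})) \<in> typical p_UV eps n"
  unfolding covers_def
proof (rule typical_cong)
  fix i assume i: "i < n"
  have "restrict (\<lambda>j. if j = 0 then vs i else c j (restrict m (insert j (A j))) i) {0..k}
      = restrict (\<lambda>j. if j = 0 then vs i else codewords A k n c m j i) {0..k}"
    using i by (auto simp: fun_eq_iff restrict_def codewords_def)
  thus "joint_seq A k us vs c m i = (us i, restrict (\<lambda>j. if j = 0 then vs i else codewords A k n c m j i) {0..k})"
    by (simp add: joint_seq_def)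
qed

lemma prod_num_msgs_ge:
  assumes L_def: "L = (\<lambda>j. num_msgs (r j) n)" and r0: "\<forall>j\<in>{1..k}. r j \<ge> 0" and J: "J \<subseteq> {1..k}"
  shows "(\<Prod>j\<in>J. real (L j)) \<ge> 2 powr (real n * (\<Sum>j\<in>J. r j)) / 2 ^ card J"
proof -
  have "2 powr (real n * (\<Sum>j\<in>J. r j)) / 2 ^ card J = (\<Prod>j\<in>J. 2 powr (real n * r j) / 2)"
    by (simp add: sum_distrib_left powr_sum prod_dividef)
  also have "\<dots> \<le> (\<Prod>j\<in>J. real (L j))"
  proof (intro prod_mono conjI)
    fix j assume j: "j \<in> J"
    hence "r j \<ge> 0" using J r0 by auto
    hence "2 powr (real n * r j) / 2 \<le> real (num_msgs (r j) n)" by (rule num_msgs_ge(1))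
    thus "2 powr (real n * r j) / 2 \<le> real (L j)" by (simp add: L_def)
    show "0 \<le> 2 powr (real n * r j) / 2" by simp
  qed
  finally show ?thesis .
qed

lemma prob_covers_pair_transfer:
  fixes G :: "'v codebook pmf"
  assumes Ghyp: "\<forall>m\<in>msgs L k. \<forall>m'\<in>msgs L k.
       map_pmf (\<lambda>c. (codewords A k n c m, codewords A k n c m')) G
     = map_pmf (\<lambda>c. (codewords A k n c m, codewords A k n c m')) (canon_cb p A L n vs k)"
    and mm: "m \<in> msgs L k" "m' \<in> msgs L k"
  shows "measure G {c. covers m c \<and> covers m' c} = measure (canon_cb p A L n vs k) {c. covers m c \<and> covers m' c}"
proof -
  define Phi where "Phi = (\<lambda>w. (\<lambda>i. (us i, restrict (\<lambda>j. if j = 0 then vs i else w j i) {0..k}))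
      \<in> typical p_UV eps n)"
  let ?f = "\<lambda>c. (codewords A k n c m, codewords A k n c m')"
  have "covers mm c \<longleftrightarrow> Phi (codewords A k n c mm)" for mm c
    unfolding covers_iff_codewords Phi_def ..
  hence "{c. covers m c \<and> covers m' c} = ?f -` {z. Phi (fst z) \<and> Phi (snd z)}"
    by (simp add: vimage_def)
  hence "measure G {c. covers m c \<and> covers m' c} = measure (map_pmf ?f G) {z. Phi (fst z) \<and> Phi (snd z)}"
    "measure (canon_cb p A L n vs k) {c. covers m c \<and> covers m' c}
      = measure (map_pmf ?f (canon_cb p A L n vs k)) {z. Phi (fst z) \<and> Phi (snd z)}"
    by (simp_all add: measure_map_pmf)
  thus ?thesis using Ghyp mm by simp
qed

lemma prob_covers_ge_half:
  assumes half: "(\<Sum>x\<in>{x\<in>seq_space. typical_row x}. seq_weight x) \<ge> 1/2"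
  shows "prob_covers \<ge> 2 powr (real n * (mean_log_ratio p A k {} - eps * mean_abs_log_ratio p A k {})) / 2"
proof -
  let ?E0 = "2 powr (real n * (mean_log_ratio p A k {} - eps * mean_abs_log_ratio p A k {}))"
  have "?E0 * (1/2) \<le> ?E0 * (\<Sum>x\<in>{x\<in>seq_space. typical_row x}. seq_weight x)"
    using half by (intro mult_left_mono) auto
  thus ?thesis using prob_covers_ge by linarith
qed

lemma overlap_ratio_le:
  assumes L_def: "L = (\<lambda>j. num_msgs (r j) n)" and r0: "\<forall>j\<in>{1..k}. r j \<ge> 0"
    and half: "(\<Sum>x\<in>{x\<in>seq_space. typical_row x}. seq_weight x) \<ge> 1/2"
    and J: "J \<in> ancestral_sets A k"
  shows "overlap_bound J / (prob_covers * (\<Prod>j\<in>J. real (L j)))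
    \<le> 2 ^ (card J + 1) * 2 powr (- (real n * rate_margin p A k eps r J))"
proof -
  define E0 where "E0 = 2 powr (real n * (mean_log_ratio p A k {} - eps * mean_abs_log_ratio p A k {}))"
  define R where "R = 2 powr (real n * (\<Sum>j\<in>J. r j))"
  have pos: "E0 > 0" "R > 0" by (simp_all add: E0_def R_def)
  have "(\<Prod>j\<in>J. real (L j)) \<ge> R / 2 ^ card J"
    using prod_num_msgs_ge[OF L_def r0] J by (simp add: R_def ancestral_sets_def)
  hence lower: "prob_covers * (\<Prod>j\<in>J. real (L j)) \<ge> (E0 / 2) * (R / 2 ^ card J)"
    using prob_covers_ge_half[OF half] prob_covers_nonneg pos by (intro mult_mono) (auto simp: E0_def)
  have "overlap_bound J / (prob_covers * (\<Prod>j\<in>J. real (L j))) \<le> overlap_bound J / ((E0 / 2) * (R / 2 ^ card J))"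
  proof (rule divide_left_mono[OF lower])
    have "(E0 / 2) * (R / 2 ^ card J) > 0" using pos by simp
    moreover from this have "prob_covers * (\<Prod>j\<in>J. real (L j)) > 0" using lower by linarith
    ultimately show "0 < prob_covers * (\<Prod>j\<in>J. real (L j)) * ((E0 / 2) * (R / 2 ^ card J))"
      by (rule mult_pos_pos[rotated])
  qed (simp add: overlap_bound_def)
  also have "\<dots> = 2 ^ (card J + 1) * (overlap_bound J / (E0 * R))"
    by (simp add: field_simps)
  also have "overlap_bound J / (E0 * R) = 2 powr (- (real n * rate_margin p A k eps r J))"
    unfolding overlap_bound_def E0_def R_def rate_margin_def
    by (simp add: powr_diff[symmetric] powr_add[symmetric] algebra_simps)
  finally show ?thesis .
qed

text \<open>Pairs of tuples agreeing exactly on the levels J contribute at most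
  prob_covers * overlap_bound J each, and there are |msgs| * prod (L j, j \<notin> J) such pairs.\<close>

lemma prob_some_covers_ge:
  fixes G :: "'v codebook pmf" and r :: "nat \<Rightarrow> real"
  assumes L_def: "L = (\<lambda>j. num_msgs (r j) n)" and r0: "\<forall>j\<in>{1..k}. r j \<ge> 0"
    and Ghyp: "\<forall>m\<in>msgs L k. \<forall>m'\<in>msgs L k.
       map_pmf (\<lambda>c. (codewords A k n c m, codewords A k n c m')) G
     = map_pmf (\<lambda>c. (codewords A k n c m, codewords A k n c m')) (canon_cb p A L n vs k)"
    and half: "(\<Sum>x\<in>{x\<in>seq_space. typical_row x}. seq_weight x) \<ge> 1/2"
  shows "measure G {c. \<exists>m\<in>msgs L k. covers m c}
    \<ge> 1 - (\<Sum>J\<in>ancestral_sets A k. 2 ^ (card J + 1) * 2 powr (- (real n * rate_margin p A k eps r J)))"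
proof -
  let ?Ms = "msgs L k"
  define M where "M = real (card ?Ms)"
  have L_pos: "real (L j) > 0" if "j \<in> {1..k}" for j
    using num_msgs_ge(2)[of "r j" n] r0 that by (simp add: L_def)
  have M_prod: "M = (\<Prod>j\<in>{1..k}. real (L j))" by (simp add: M_def card_msgs)
  have M_pos: "M > 0" unfolding M_prod using L_pos by (intro prod_pos) auto
  have "2 powr (real n * (mean_log_ratio p A k {} - eps * mean_abs_log_ratio p A k {})) / 2 > 0" by simp
  with prob_covers_ge_half[OF half] have tau_pos: "prob_covers > 0" by linarith
  have single: "measure G {c. covers m c} = prob_covers" if m: "m \<in> ?Ms" for m
    using prob_covers_pair_transfer[OF Ghyp m m] prob_covers_pair_eq[OF m m] pair_sum_identical
    unfolding agree_levels_self by simp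
  have mean: "M * prob_covers = (\<Sum>m\<in>?Ms. measure G {c. covers m c})" by (simp add: single M_def)
  define eta where "eta = (\<Sum>J\<in>ancestral_sets A k. overlap_bound J / (prob_covers * (\<Prod>j\<in>J. real (L j))))"
  have "(\<Sum>m\<in>?Ms. \<Sum>m'\<in>?Ms. measure G {c. covers m c \<and> covers m' c})
      = (\<Sum>m\<in>?Ms. \<Sum>m'\<in>?Ms. measure (canon_cb p A L n vs k) {c. covers m c \<and> covers m' c})"
    using prob_covers_pair_transfer[OF Ghyp] by (intro sum.cong refl) auto
  also have "\<dots> \<le> M^2 * prob_covers^2
      + (\<Sum>J\<in>ancestral_sets A k. prob_covers * overlap_bound J * (M * (\<Prod>j\<in>{1..k}-J. real (L j))))"
    using sum_prob_covers_pairs_le by (simp add: M_def)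
  also have "(\<Sum>J\<in>ancestral_sets A k. prob_covers * overlap_bound J * (M * (\<Prod>j\<in>{1..k}-J. real (L j))))
      = (M * prob_covers)^2 * eta"
    unfolding eta_def sum_distrib_left
  proof (intro sum.cong refl)
    fix J assume "J \<in> ancestral_sets A k"
    hence J: "J \<subseteq> {1..k}" by (auto simp: ancestral_sets_def)
    have "(\<Prod>j\<in>J. real (L j)) > 0" using J L_pos by (intro prod_pos) auto
    moreover have "M = (\<Prod>j\<in>{1..k}-J. real (L j)) * (\<Prod>j\<in>J. real (L j))"
      unfolding M_prod using J by (intro prod.subset_diff) auto
    ultimately show "prob_covers * overlap_bound J * (M * (\<Prod>j\<in>{1..k}-J. real (L j)))
        = (M * prob_covers)^2 * (overlap_bound J / (prob_covers * (\<Prod>j\<in>J. real (L j))))"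
      using tau_pos by (simp add: field_simps power2_eq_square)
  qed
  finally have second: "(\<Sum>m\<in>?Ms. \<Sum>m'\<in>?Ms. measure G {c. covers m c \<and> covers m' c})
      \<le> (M * prob_covers)^2 * (1 + eta)"
    by (simp add: algebra_simps power2_eq_square)
  have "measure G {c. \<exists>m\<in>?Ms. covers m c} \<ge> 1 - eta"
    by (rule second_moment_bound[OF finite_msgs mean _ second]) (use M_pos tau_pos in simp)
  moreover have "eta \<le> (\<Sum>J\<in>ancestral_sets A k. 2 ^ (card J + 1) * 2 powr (- (real n * rate_margin p A k eps r J)))"
    unfolding eta_def by (intro sum_mono overlap_ratio_le[OF L_def r0 half])
  ultimately show ?thesis by linarith
qed

end

lemma prob_covering_ge:
  fixes p :: "('u::finite \<times> (nat \<Rightarrow> 'v::finite)) pmf"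
    and k :: nat and A :: "nat \<Rightarrow> nat set" and G :: "'v codebook pmf" and r :: "nat \<Rightarrow> real"
  assumes A_sub: "\<forall>j\<in>{1..k}. A j \<subseteq> {1..<j}"
    and A_cl: "\<forall>j\<in>{1..k}. \<forall>i\<in>A j. A i \<subseteq> A j"
    and typ0: "(\<lambda>i. (us i, vs i)) \<in> typical (map_pmf (\<lambda>(u, v). (u, v 0)) p) eps' n"
    and eps: "0 < eps'" "eps' < eps" and npos: "n > 0"
    and r0: "\<forall>j\<in>{1..k}. r j \<ge> 0"
    and Ghyp: "\<forall>m\<in>msgs (\<lambda>j. num_msgs (r j) n) k. \<forall>m'\<in>msgs (\<lambda>j. num_msgs (r j) n) k.
       map_pmf (\<lambda>c. (codewords A k n c m, codewords A k n c m')) G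
     = map_pmf (\<lambda>c. (codewords A k n c m, codewords A k n c m')) (canon_cb p A (\<lambda>j. num_msgs (r j) n) n vs k)"
    and n_large: "(\<Sum>a\<in>set_pmf (marg_UV p {0..k}). 1 / (real n * (eps - eps')^2 * (pmf (marg_UV p {0..k}) a)^2))
        \<le> 1/2"
  shows "measure G {c. \<exists>m\<in>msgs (\<lambda>j. num_msgs (r j) n) k. joint_seq A k us vs c m \<in> typical
      (marg_UV p {0..k}) eps n}
    \<ge> 1 - (\<Sum>J\<in>ancestral_sets A k. 2 ^ (card J + 1) * 2 powr (- (real n * rate_margin p A k eps r J)))"
proof -
  interpret E: covering_setup p k us vs n eps eps' A "\<lambda>j. num_msgs (r j) n"
    using A_sub A_cl typ0 eps npos by unfold_locales auto
  have half: "(\<Sum>x\<in>{x\<in>E.seq_space. E.typical_row x}. E.seq_weight x) \<ge> 1/2"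
    using E.prob_typical_row_ge n_large by linarith
  show ?thesis
    using E.prob_some_covers_ge[OF refl r0 Ghyp half]
    by (simp add: E.covers_def)
qed

lemma covering_prob_tendsto_1:
  fixes p :: "('u::finite \<times> (nat \<Rightarrow> 'v::finite)) pmf"
    and k :: nat and A :: "nat \<Rightarrow> nat set" and r :: "nat \<Rightarrow> real"
    and Q :: "nat \<Rightarrow> ((nat \<Rightarrow> 'u) \<times> (nat \<Rightarrow> 'v)) pmf"
    and G :: "nat \<Rightarrow> (nat \<Rightarrow> 'v) \<Rightarrow> 'v codebook pmf"
  assumes A_sub: "\<forall>j\<in>{1..k}. A j \<subseteq> {1..<j}"
    and A_cl: "\<forall>j\<in>{1..k}. \<forall>i\<in>A j. A i \<subseteq> A j"
    and eps: "0 < eps'" "eps' < eps"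
    and r0: "\<forall>j\<in>{1..k}. r j \<ge> 0"
    and Ghyp: "\<forall>n vs. \<forall>m\<in>msgs (\<lambda>j. num_msgs (r j) n) k. \<forall>m'\<in>msgs
        (\<lambda>j. num_msgs (r j) n) k.
            map_pmf (\<lambda>c. (codewords A k n c m, codewords A k n c m')) (G n vs)
          = map_pmf (\<lambda>c. (codewords A k n c m, codewords A k n c m'))
              (canon_cb p A (\<lambda>j. num_msgs (r j) n) n vs k)"
    and Qlim: "(\<lambda>n. measure_pmf.prob (Q n)
              {(us, vs). (\<lambda>i. (us i, vs i)) \<in> typical (map_pmf (\<lambda>(u, v). (u, v 0)) p) eps' n})
          \<longlonglongrightarrow> 1"
    and margin: "\<And>J. J \<in> ancestral_sets A k \<Longrightarrow> rate_margin p A k eps r J > 0"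
  shows "(\<lambda>n. measure_pmf.prob
              (Q n \<bind> (\<lambda>(us, vs). map_pmf (\<lambda>c. (us, vs, c)) (G n vs)))
              {(us, vs, c). \<exists>m\<in>msgs (\<lambda>j. num_msgs (r j) n) k.
                 joint_seq A k us vs c m \<in> typical (marg_UV p {0..k}) eps n})
          \<longlonglongrightarrow> 1" (is "?P \<longlonglongrightarrow> 1")
proof -
  let ?pUV = "marg_UV p {0..k}"
  define T where "T n = {(us, vs). (\<lambda>i. (us i, vs i)) \<in> typical (map_pmf (\<lambda>(u, v). (u, v 0)) p) eps' n}" for n
  define eta where "eta n = (\<Sum>J\<in>ancestral_sets A k. 2 ^ (card J + 1)
      * 2 powr (- (real n * rate_margin p A k eps r J)))" for n
  define C where "C = (\<Sum>a\<in>set_pmf ?pUV. 1 / ((eps - eps')^2 * (pmf ?pUV a)^2))"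
  have eta_lim: "eta \<longlonglongrightarrow> 0"
    unfolding eta_def by (intro tendsto_null_sum tendsto_mult_right_zero tendsto_powr_neg_mult margin)
  have lower: "(1 - eta n) * measure (Q n) (T n) \<le> ?P n" if n: "n > 0" "real n \<ge> 2 * C" for n
  proof (rule measure_bind_pmf_ge)
    fix x assume "x \<in> T n"
    then obtain us vs where x: "x = (us, vs)"
      and typ0: "(\<lambda>i. (us i, vs i)) \<in> typical (map_pmf (\<lambda>(u, v). (u, v 0)) p) eps' n"
      by (auto simp: T_def)
    have "(\<Sum>a\<in>set_pmf ?pUV. 1 / (real n * (eps - eps')^2 * (pmf ?pUV a)^2)) = C / real n"
      unfolding C_def sum_divide_distrib by (intro sum.cong refl) (simp add: field_simps)
    also have "\<dots> \<le> 1/2" using n by (simp add: pos_divide_le_eq)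
    finally have n_large: "(\<Sum>a\<in>set_pmf ?pUV. 1 / (real n * (eps - eps')^2 * (pmf ?pUV a)^2)) \<le> 1/2" .
    have "1 - eta n \<le> measure (G n vs)
        {c. \<exists>m\<in>msgs (\<lambda>j. num_msgs (r j) n) k. joint_seq A k us vs c m \<in> typical ?pUV eps n}"
      unfolding eta_def by (rule prob_covering_ge[OF A_sub A_cl typ0 eps n(1) r0 spec[OF spec[OF Ghyp, of n], of vs] n_large])
    also have "\<dots> = measure (map_pmf (\<lambda>c. (us, vs, c)) (G n vs))
        {(us, vs, c). \<exists>m\<in>msgs (\<lambda>j. num_msgs (r j) n) k. joint_seq A k us vs c m \<in> typical ?pUV eps n}"
      by (simp add: measure_map_pmf vimage_def)
    finally show "1 - eta n \<le> measure ((\<lambda>(us, vs). map_pmf (\<lambda>c. (us, vs, c)) (G n vs)) x)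
        {(us, vs, c). \<exists>m\<in>msgs (\<lambda>j. num_msgs (r j) n) k. joint_seq A k us vs c m \<in> typical ?pUV eps n}"
      by (simp only: x prod.case)
  qed
  have "eventually (\<lambda>n. (1 - eta n) * measure (Q n) (T n) \<le> ?P n) sequentially"
  proof -
    obtain N :: nat where N: "real N \<ge> 2 * C" using real_arch_simple by blast
    show ?thesis
    proof (rule eventually_sequentiallyI[of "Suc N"])
      fix n assume "Suc N \<le> n"
      with N show "(1 - eta n) * measure (Q n) (T n) \<le> ?P n" by (intro lower) auto
    qed
  qed
  moreover have "eventually (\<lambda>n. ?P n \<le> 1) sequentially" by simp
  moreover have "(\<lambda>n. (1 - eta n) * measure (Q n) (T n)) \<longlonglongrightarrow> 1"
    using tendsto_mult[OF tendsto_diff[OF tendsto_const eta_lim] Qlim] unfolding T_def by simp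
  ultimately show ?thesis by (rule tendsto_sandwich[OF _ _ _ tendsto_const])
qed

theorem lemma1:
  fixes p :: "('u::finite \<times> (nat \<Rightarrow> 'v::finite)) pmf"
    and k :: nat and A :: "nat \<Rightarrow> nat set"
  assumes "k \<ge> 1"
    and "\<forall>j\<in>{1..k}. A j \<subseteq> {1..<j}"
    and "\<forall>j\<in>{1..k}. \<forall>i\<in>A j. A i \<subseteq> A j"
  shows "\<exists>\<delta>::real \<Rightarrow> real. (\<delta> \<longlongrightarrow> 0) (at_right 0) \<and>
    (\<forall>(\<epsilon>::real) (\<epsilon>'::real) (r::nat \<Rightarrow> real)
       (Q::nat \<Rightarrow> ((nat \<Rightarrow> 'u) \<times> (nat \<Rightarrow> 'v)) pmf)
       (G::nat \<Rightarrow> (nat \<Rightarrow> 'v) \<Rightarrow> 'v codebook pmf).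
      0 < \<epsilon>' \<and> \<epsilon>' < \<epsilon> \<and> \<epsilon> < 1 \<and> (\<forall>j\<in>{1..k}. r j \<ge> 0)
      \<and> (\<forall>n vs. \<forall>m\<in>msgs (\<lambda>j. num_msgs (r j) n) k. \<forall>m'\<in>msgs
          (\<lambda>j. num_msgs (r j) n) k.
            map_pmf (\<lambda>c. (codewords A k n c m, codewords A k n c m')) (G n vs)
          = map_pmf (\<lambda>c. (codewords A k n c m, codewords A k n c m'))
              (canon_cb p A (\<lambda>j. num_msgs (r j) n) n vs k))
      \<and> (\<lambda>n. measure_pmf.prob (Q n)
              {(us, vs). (\<lambda>i. (us i, vs i)) \<in> typical (map_pmf (\<lambda>(u, v). (u, v 0)) p) \<epsilon>' n})
          \<longlonglongrightarrow> 1
      \<and> (\<forall>J. J \<noteq> {} \<and> J \<subseteq> {1..k} \<and> (\<forall>j\<in>J. A j \<subseteq> J) \<longrightarrow>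
            (\<Sum>j\<in>J. r j) > (\<Sum>j\<in>J. cond_ent_j p A j) - cond_ent_J p J + \<delta> \<epsilon>)
      \<longrightarrow> (\<lambda>n. measure_pmf.prob
              (Q n \<bind> (\<lambda>(us, vs). map_pmf (\<lambda>c. (us, vs, c)) (G n vs)))
              {(us, vs, c). \<exists>m\<in>msgs (\<lambda>j. num_msgs (r j) n) k.
                 joint_seq A k us vs c m \<in> typical (marg_UV p {0..k}) \<epsilon> n})
          \<longlonglongrightarrow> 1)"
proof -
  define D where "D = (\<Sum>J\<in>Pow {1..k}. mean_abs_log_ratio p A k J + mean_abs_log_ratio p A k {}) + 1"
  have D_ge: "mean_abs_log_ratio p A k J + mean_abs_log_ratio p A k {} + 1 \<le> D" if "J \<subseteq> {1..k}" for J
    unfolding D_def using that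
    by (intro add_right_mono member_le_sum[where f="\<lambda>J. mean_abs_log_ratio p A k J + mean_abs_log_ratio p A k {}"])
       (auto simp: mean_abs_log_ratio_def intro!: add_nonneg_nonneg sum_nonneg)
  have A_subset: "\<forall>j\<in>{1..k}. A j \<subseteq> {1..k}" using assms(2) by fastforce
  show ?thesis
  proof (intro exI[of _ "\<lambda>e. e * D"] conjI allI impI, goal_cases)
    case 1
    have "((\<lambda>e::real. e * D) \<longlongrightarrow> 0 * D) (at_right 0)" by (intro tendsto_intros)
    then show ?case by simp
  next
    case (2 eps eps' r Q G)
    then have eps: "0 < eps'" "eps' < eps" and r0: "\<forall>j\<in>{1..k}. r j \<ge> 0" by auto
    note Ghyp_Qlim = 2[THEN conjunct2, THEN conjunct2, THEN conjunct2, THEN conjunct2]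
    have margin: "rate_margin p A k eps r J > 0" if "J \<in> ancestral_sets A k" for J
    proof -
      from that have J: "J \<noteq> {}" "J \<subseteq> {1..k}" "\<forall>j\<in>J. A j \<subseteq> J"
          by (auto simp: ancestral_sets_def)
      then have "(\<Sum>j\<in>J. r j) > (\<Sum>j\<in>J. cond_ent_j p A j) - cond_ent_J p J + eps * D"
        using Ghyp_Qlim[THEN conjunct2, THEN conjunct2] by blast
      moreover have "eps * mean_abs_log_ratio p A k J + eps * mean_abs_log_ratio p A k {} + eps \<le> eps * D"
        using eps mult_left_mono[OF D_ge[OF J(2)], of eps] by (simp add: distrib_left)
      ultimately show ?thesis
        using eps expect_log_ratio_diff[where p=p, OF J(2) A_subset] unfolding rate_margin_def distrib_left by linarith
    qed
    show ?case
      by (rule covering_prob_tendsto_1[OF assms(2,3) eps r0 Ghyp_Qlim[THEN conjunct1]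
            Ghyp_Qlim[THEN conjunct2, THEN conjunct1] margin])
  qed
qed

end
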